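(* Let $\alpha,\beta,\eta\in\mathbb{C}$. Every extension of an irreducible nontrivial module by $\mathbb{C}c_\eta$ over the algebras below can be written as $E=\mathbb{C}c_\eta\oplus\mathbb{C}[\partial]v$ with $L_\lambda v=(\partial+\alpha\lambda+\beta)v+f(\lambda)c_\eta$, $Y_\lambda v=\gamma v+g(\lambda)c_\eta$ (with $\gamma=0$ except for $TSV(1,0)$), $M_\lambda v=h(\lambda)c_\eta$, where $f,g,h\in\mathbb{C}[\lambda]$. (1)(i) For $TSV(a,b)$ with $(a,b)\neq(1,0)$ and $\alpha\neq0$: in every such extension $h=0$, and a nontrivial extension of $M_{\alpha,\beta}$ by $\mathbb{C}c_\eta$ exists iff one of the following holds; every nontrivial extension is equivalent to one with $h=0$ and $(f,g)$ as listed: (a) $g=0$, $\beta+\eta=0$, and either $\alpha=1$, $f=c_2\lambda^2$, $c_2\neq0$, or $\alpha=2$, $f=c_3\lambda^3$, $c_3\neq0$; (b) $a\neq1$, $b=0$, $\beta+\eta=0$, $\alpha=1-a$, $g=k\neq0$ constant, $f=c_2\lambda^2$ if $\alpha=1$, $f=c_3\lambda^3$ if $\alpha=2$, $f=0$ otherwise ($c_2,c_3\in\mathbb{C}$ arbitrary); (c) $a\neq1$, $b+\beta+\eta=0$, $\beta+\eta\neq0$, $\alpha=1-a$, $g=k\neq0$ constant, $f=0$; (d) $a=1$, $b\neq0$, $b+\beta+\eta=0$, $\alpha=1$, $g=k(1-\frac1b\lambda)$ with $k\neq0$, $f=0$. (1)(ii) For $TSV(1,0)$ and $(\alpha,\gamma)\neq(0,0)$: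 in every such extension of $M_{\alpha,\beta,\gamma}$ by $\mathbb{C}c_\eta$ we have $h=0$; a nontrivial extension exists iff $\beta+\eta=0$ and $\gamma=0$; and every nontrivial extension is equivalent to one with $h=0$ and either $g=0$, $\alpha\in\{1,2\}$, $f=c_2\lambda^2$ ($\alpha=1$, $c_2\neq0$) or $f=c_3\lambda^3$ ($\alpha=2$, $c_3\neq0$); or $g=k\lambda$ with $k\neq0$, $\alpha=1$, $f=c_2\lambda^2$ with $c_2\in\mathbb{C}$. (2) For $TSV(c)$ and $\alpha\neq0$: in every such extension of $M_{\alpha,\beta}$ by $\mathbb{C}c_\eta$ we have $h=0$; a nontrivial extension exists iff one of the following holds, and every nontrivial extension is equivalent to one with $h=0$ and: (a) $g=0$, $\beta+\eta=0$, and either $\alpha=1$, $f=c_2\lambda^2$, $c_2\neq0$, or $\alpha=2$, $f=c_3\lambda^3$, $c_3\neq0$; or (b) $c+\beta+\eta=0$, $\alpha=-\frac12$, $g=k\neq0$ constant, $f=0$.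
   Context: A conformal module over a Lie conformal algebra $\mathcal{R}$ is a $\mathbb{C}[\partial]$-module $V$ with $\mathbb{C}$-linear maps $a\otimes v\mapsto a_\lambda v\in V[\lambda]$ such that $(\partial a)_\lambda v=-\lambda a_\lambda v$, $a_\lambda(\partial v)=(\partial+\lambda)a_\lambda v$, and $a_\lambda(b_\mu v)-b_\mu(a_\lambda v)=[a_\lambda b]_{\lambda+\mu}v$. $TSV(a,b)$ ($a,b\in\mathbb{C}$) is the free $\mathbb{C}[\partial]$-module on $L,Y,M$ with $[L_\lambda L]=(\partial+2\lambda)L$, $[L_\lambda Y]=(\partial+a\lambda+b)Y$, $[L_\lambda M]=(\partial+2(a-1)\lambda+2b)M$, $[Y_\lambda Y]=(\partial+2\lambda)M$, $[Y_\lambda M]=[M_\lambda M]=0$. $TSV(c)$ ($c\in\mathbb{C}$) is the free $\mathbb{C}[\partial]$-module on $L,Y,M$ with $[L_\lambda L]=(\partial+2\lambda)L$, $[L_\lambda Y]=(\partial+\frac32\lambda+c)Y$, $[L_\lambda M]=(\partial+2c)M$, $[Y_\lambda Y]=(\partial+2\lambda)(-\partial-2c)M$, $[Y_\lambda M]=[M_\lambda M]=0$. For $TSV(a,b)$ with $(a,b)\neq(1,0)$ and for $TSV(c)$, $M_{\alpha,\beta}=\mathbb{C}[\partial]v$ ($\alpha\neq0$) has $L_\lambda v=(\partial+\alpha\lambda+\beta)v$, $Y_\lambda v=M_\lambda v=0$. For $TSV(1,0)$, $M_{\alpha,\beta,\gamma}=\mathbb{C}[\partial]v$ ($(\alpha,\gamma)\neq(0,0)$)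 has $L_\lambda v=(\partial+\alpha\lambda+\beta)v$, $Y_\lambda v=\gamma v$, $M_\lambda v=0$. $\mathbb{C}c_\eta$ is the one-dimensional module with $\partial c_\eta=\eta c_\eta$ and all $\lambda$-actions zero; it is a submodule of $E$. An extension is an exact sequence of modules; equivalence means a module homomorphism between middle terms compatible with the identities on the end terms; trivial means equivalent to the direct sum extension. *)

theory Defs
  imports Complex_Main "HOL-Computational_Algebra.Polynomial" "HOL-Library.Product_Plus"
begin

datatype gen = L | Y | M

text \<open>A TSV-type algebra is given by the lambda-brackets of its generators:
  [L_lam L] = bLL(d,lam) L, [L_lam Y] = bLY(d,lam) Y, [L_lam M] = bLM(d,lam) M,
  [Y_lam Y] = bYY(d,lam) M, [Y_lam M] = [M_lam M] = 0 (the remaining brackets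
  are determined by skew-symmetry).  Each field is the polynomial coefficient
  as a function of (d, lam).\<close>
record alg =
  bLL :: "complex \<Rightarrow> complex \<Rightarrow> complex"
  bLY :: "complex \<Rightarrow> complex \<Rightarrow> complex"
  bLM :: "complex \<Rightarrow> complex \<Rightarrow> complex"
  bYY :: "complex \<Rightarrow> complex \<Rightarrow> complex"

definition TSV_ab :: "complex \<Rightarrow> complex \<Rightarrow> alg" where
  "TSV_ab a b = \<lparr> bLL = (\<lambda>d l. d + 2*l),
                   bLY = (\<lambda>d l. d + a*l + b),
                   bLM = (\<lambda>d l. d + 2*(a-1)*l + 2*b),
                   bYY = (\<lambda>d l. d + 2*l) \<rparr>"

definition TSV_c :: "complex \<Rightarrow> alg" where
  "TSV_c c = \<lparr> bLL = (\<lambda>d l. d + 2*l),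
                bLY = (\<lambda>d l. d + 3/2*l + c),
                bLM = (\<lambda>d l. d + 2*c),
                bYY = (\<lambda>d l. (d + 2*l) * (- d - 2*c)) \<rparr>"

text \<open>A (candidate) conformal module on a type 'v: a complex scalar multiplication
  sc, the action dd of the indeterminate d (making 'v a C[d]-module), and the
  lambda-action of the generators, evaluated at lam::complex
  (act x lam v = x_lam v).  Since R is free over C[d] on L,Y,M and
  (d a)_lam = -lam a_lam, the action on generators determines everything.\<close>
record 'v cmod =
  sc  :: "complex \<Rightarrow> 'v \<Rightarrow> 'v"
  dd  :: "'v \<Rightarrow> 'v"
  act :: "gen \<Rightarrow> complex \<Rightarrow> 'v \<Rightarrow> 'v"

definition is_lin :: "(complex \<Rightarrow> 'v::ab_group_add \<Rightarrow> 'v) \<Rightarrow> (complex \<Rightarrow> 'w::ab_group_add \<Rightarrow> 'w)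
    \<Rightarrow> ('v \<Rightarrow> 'w) \<Rightarrow> bool" where
  "is_lin s1 s2 \<phi> \<longleftrightarrow> (\<forall>x y. \<phi> (x + y) = \<phi> x + \<phi> y) \<and> (\<forall>c x. \<phi> (s1 c x) = s2 c (\<phi> x))"

text \<open>Polynomiality: x_lam v lies in V[lam].
  The bracket axiom a_lam(b_mu v) - b_mu(a_lam v) = [a_lam b]_{lam+mu} v is
  imposed for the pairs (L,L),(L,Y),(L,M),(Y,Y),(Y,M),(M,M); for the reversed
  pairs it is then automatic by skew-symmetry.  ([P(d,lam) X]_{nu} = P(-nu,lam) X_nu.)\<close>
definition is_cmod :: "alg \<Rightarrow> ('v::ab_group_add) cmod \<Rightarrow> bool" where
  "is_cmod R V \<longleftrightarrow>
     vector_space (sc V) \<and>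
     is_lin (sc V) (sc V) (dd V) \<and>
     (\<forall>x l. is_lin (sc V) (sc V) (act V x l)) \<and>
     (\<forall>x v. \<exists>n (c :: nat \<Rightarrow> 'v). \<forall>l. act V x l v = (\<Sum>i\<le>n. sc V (l ^ i) (c i))) \<and>
     (\<forall>x l v. act V x l (dd V v) = dd V (act V x l v) + sc V l (act V x l v)) \<and>
     (\<forall>l m v.
        act V L l (act V L m v) - act V L m (act V L l v) = sc V (bLL R (-(l+m)) l) (act V L (l+m) v) \<and>
        act V L l (act V Y m v) - act V Y m (act V L l v) = sc V (bLY R (-(l+m)) l) (act V Y (l+m) v) \<and>
        act V L l (act V M m v) - act V M m (act V L l v) = sc V (bLM R (-(l+m)) l) (act V M (l+m) v) \<and>
        act V Y l (act V Y m v) - act V Y m (act V Y l v) = sc V (bYY R (-(l+m)) l) (act V M (l+m) v) \<and>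
        act V Y l (act V M m v) - act V M m (act V Y l v) = 0 \<and>
        act V M l (act V M m v) - act V M m (act V M l v) = 0)"

definition is_hom :: "('v::ab_group_add) cmod \<Rightarrow> ('w::ab_group_add) cmod \<Rightarrow> ('v \<Rightarrow> 'w) \<Rightarrow> bool" where
  "is_hom V W \<phi> \<longleftrightarrow> is_lin (sc V) (sc W) \<phi> \<and> (\<forall>v. \<phi> (dd V v) = dd W (\<phi> v)) \<and>
     (\<forall>x l v. \<phi> (act V x l v) = act W x l (\<phi> v))"

definition Ceta :: "complex \<Rightarrow> complex cmod" where
  "Ceta \<eta> = \<lparr> sc = (\<lambda>c x. c * x), dd = (\<lambda>x. \<eta> * x), act = (\<lambda>_ _ _. 0) \<rparr>"

text \<open>M_{alpha,beta,gamma} = C[d]v realised on complex poly (q represents q(d) v):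
  L_lam v = (d + alpha lam + beta) v, Y_lam v = gamma v, M_lam v = 0.
  M_{alpha,beta} is the case gamma = 0.\<close>
definition Mabg :: "complex \<Rightarrow> complex \<Rightarrow> complex \<Rightarrow> complex poly cmod" where
  "Mabg \<alpha> \<beta> \<gamma> = \<lparr> sc = smult, dd = (\<lambda>q. [:0, 1:] * q),
     act = (\<lambda>x l q. case x of
              L \<Rightarrow> pcompose q [:l, 1:] * [:\<alpha> * l + \<beta>, 1:]
            | Y \<Rightarrow> smult \<gamma> (pcompose q [:l, 1:])
            | M \<Rightarrow> 0) \<rparr>"

text \<open>An extension of M by C c_eta: a module E on 'v with i : C c_eta -> E,
  p : E -> M such that 0 -> C c_eta -> E -> M -> 0 is exact.\<close>
type_synonym 'v ext = "'v cmod \<times> (complex \<Rightarrow> 'v) \<times> ('v \<Rightarrow> complex poly)"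

definition is_ext :: "alg \<Rightarrow> complex \<Rightarrow> complex poly cmod \<Rightarrow> ('v::ab_group_add) ext \<Rightarrow> bool" where
  "is_ext R \<eta> Mm E \<longleftrightarrow> (case E of (V, i, p) \<Rightarrow>
     is_cmod R V \<and> is_hom (Ceta \<eta>) V i \<and> is_hom V Mm p \<and>
     inj i \<and> surj p \<and> range i = {v. p v = 0})"

definition ext_equiv :: "alg \<Rightarrow> complex \<Rightarrow> complex poly cmod \<Rightarrow> ('v::ab_group_add) ext \<Rightarrow> ('w::ab_group_add) ext \<Rightarrow> bool" where
  "ext_equiv R \<eta> Mm E E' \<longleftrightarrow> is_ext R \<eta> Mm E \<and> is_ext R \<eta> Mm E' \<and>
     (case E of (V, i, p) \<Rightarrow> case E' of (V', i', p') \<Rightarrow>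
        (\<exists>\<phi>. is_hom V V' \<phi> \<and> (\<forall>x. \<phi> (i x) = i' x) \<and> (\<forall>v. p' (\<phi> v) = p v)))"

definition dsum :: "('a::ab_group_add) cmod \<Rightarrow> ('b::ab_group_add) cmod \<Rightarrow> ('a \<times> 'b) cmod" where
  "dsum A B = \<lparr> sc = (\<lambda>c (x, y). (sc A c x, sc B c y)),
                 dd = (\<lambda>(x, y). (dd A x, dd B y)),
                 act = (\<lambda>g l (x, y). (act A g l x, act B g l y)) \<rparr>"

definition split_ext :: "complex \<Rightarrow> complex poly cmod \<Rightarrow> (complex \<times> complex poly) ext" where
  "split_ext \<eta> Mm = (dsum (Ceta \<eta>) Mm, (\<lambda>x. (x, 0)), snd)"

definition trivial_ext :: "alg \<Rightarrow> complex \<Rightarrow> complex poly cmod \<Rightarrow> ('v::ab_group_add) ext \<Rightarrow> bool" where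
  "trivial_ext R \<eta> Mm E \<longleftrightarrow> ext_equiv R \<eta> Mm E (split_ext \<eta> Mm)"

text \<open>The normal form E = C c_eta (+) C[d] v on complex x complex poly, where
  (x, q) represents x c_eta + q(d) v, with
  L_lam v = (d + alpha lam + beta) v + f(lam) c_eta,
  Y_lam v = gamma v + g(lam) c_eta,  M_lam v = h(lam) c_eta,
  extended to all of E by x_lam (q(d) v) = q(d + lam) x_lam v and x_lam c_eta = 0.\<close>
definition NF :: "complex \<Rightarrow> complex \<Rightarrow> complex \<Rightarrow> complex \<Rightarrow> complex poly \<Rightarrow> complex poly \<Rightarrow> complex poly
    \<Rightarrow> (complex \<times> complex poly) cmod" where
  "NF \<alpha> \<beta> \<gamma> \<eta> f g h = \<lparr> sc = (\<lambda>c (x, q). (c * x, smult c q)),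
     dd = (\<lambda>(x, q). (\<eta> * x, [:0, 1:] * q)),
     act = (\<lambda>z l (x, q). case z of
              L \<Rightarrow> (poly q (\<eta> + l) * poly f l, pcompose q [:l, 1:] * [:\<alpha> * l + \<beta>, 1:])
            | Y \<Rightarrow> (poly q (\<eta> + l) * poly g l, smult \<gamma> (pcompose q [:l, 1:]))
            | M \<Rightarrow> (poly q (\<eta> + l) * poly h l, 0)) \<rparr>"

definition NF_ext :: "complex \<Rightarrow> complex \<Rightarrow> complex \<Rightarrow> complex \<Rightarrow> complex poly \<Rightarrow> complex poly \<Rightarrow> complex poly
    \<Rightarrow> (complex \<times> complex poly) ext" where
  "NF_ext \<alpha> \<beta> \<gamma> \<eta> f g h = (NF \<alpha> \<beta> \<gamma> \<eta> f g h, (\<lambda>x. (x, 0)), snd)"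

definition list_ab :: "complex \<Rightarrow> complex \<Rightarrow> complex \<Rightarrow> complex \<Rightarrow> complex \<Rightarrow> complex poly \<Rightarrow> complex poly \<Rightarrow> bool" where
  "list_ab a b \<alpha> \<beta> \<eta> f g \<longleftrightarrow>
     \<comment> \<open>(a)\<close>
     (g = 0 \<and> \<beta> + \<eta> = 0 \<and>
        ((\<alpha> = 1 \<and> (\<exists>c2. c2 \<noteq> 0 \<and> f = monom c2 2)) \<or> (\<alpha> = 2 \<and> (\<exists>c3. c3 \<noteq> 0 \<and> f = monom c3 3)))) \<or>
     \<comment> \<open>(b)\<close>
     (a \<noteq> 1 \<and> b = 0 \<and> \<beta> + \<eta> = 0 \<and> \<alpha> = 1 - a \<and> (\<exists>k. k \<noteq> 0 \<and> g = [:k:]) \<and>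
        (if \<alpha> = 1 then (\<exists>c2. f = monom c2 2) else if \<alpha> = 2 then (\<exists>c3. f = monom c3 3) else f = 0)) \<or>
     \<comment> \<open>(c)\<close>
     (a \<noteq> 1 \<and> b + \<beta> + \<eta> = 0 \<and> \<beta> + \<eta> \<noteq> 0 \<and> \<alpha> = 1 - a \<and> (\<exists>k. k \<noteq> 0 \<and> g = [:k:]) \<and> f = 0) \<or>
     \<comment> \<open>(d)\<close>
     (a = 1 \<and> b \<noteq> 0 \<and> b + \<beta> + \<eta> = 0 \<and> \<alpha> = 1 \<and> (\<exists>k. k \<noteq> 0 \<and> g = smult k [:1, - 1 / b:]) \<and> f = 0)"

definition list_10 :: "complex \<Rightarrow> complex \<Rightarrow> complex \<Rightarrow> complex \<Rightarrow> complex poly \<Rightarrow> complex poly \<Rightarrow> bool" where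
  "list_10 \<alpha> \<beta> \<gamma> \<eta> f g \<longleftrightarrow> \<beta> + \<eta> = 0 \<and> \<gamma> = 0 \<and>
     ((g = 0 \<and> ((\<alpha> = 1 \<and> (\<exists>c2. c2 \<noteq> 0 \<and> f = monom c2 2)) \<or> (\<alpha> = 2 \<and> (\<exists>c3. c3 \<noteq> 0 \<and> f = monom c3 3)))) \<or>
      ((\<exists>k. k \<noteq> 0 \<and> g = monom k 1) \<and> \<alpha> = 1 \<and> (\<exists>c2. f = monom c2 2)))"

definition list_c :: "complex \<Rightarrow> complex \<Rightarrow> complex \<Rightarrow> complex \<Rightarrow> complex poly \<Rightarrow> complex poly \<Rightarrow> bool" where
  "list_c c \<alpha> \<beta> \<eta> f g \<longleftrightarrow>
     (g = 0 \<and> \<beta> + \<eta> = 0 \<and>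
        ((\<alpha> = 1 \<and> (\<exists>c2. c2 \<noteq> 0 \<and> f = monom c2 2)) \<or> (\<alpha> = 2 \<and> (\<exists>c3. c3 \<noteq> 0 \<and> f = monom c3 3)))) \<or>
     (c + \<beta> + \<eta> = 0 \<and> \<alpha> = - 1 / 2 \<and> (\<exists>k. k \<noteq> 0 \<and> g = [:k:]) \<and> f = 0)"

definition classification :: "'v::ab_group_add itself \<Rightarrow> alg \<Rightarrow> complex \<Rightarrow> complex \<Rightarrow> complex \<Rightarrow> complex
    \<Rightarrow> (complex poly \<Rightarrow> complex poly \<Rightarrow> bool) \<Rightarrow> bool" where
  "classification _ R \<alpha> \<beta> \<gamma> \<eta> lst \<longleftrightarrow>
     (let Mm = Mabg \<alpha> \<beta> \<gamma> in
     (\<forall>E :: 'v ext. is_ext R \<eta> Mm E \<longrightarrow>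
        (\<exists>f g h. ext_equiv R \<eta> Mm E (NF_ext \<alpha> \<beta> \<gamma> \<eta> f g h))) \<and>
     (\<forall>f g h. is_ext R \<eta> Mm (NF_ext \<alpha> \<beta> \<gamma> \<eta> f g h) \<longrightarrow> h = 0) \<and>
     (\<forall>E :: 'v ext. is_ext R \<eta> Mm E \<and> \<not> trivial_ext R \<eta> Mm E \<longrightarrow>
        (\<exists>f g. lst f g \<and> ext_equiv R \<eta> Mm E (NF_ext \<alpha> \<beta> \<gamma> \<eta> f g 0))) \<and>
     ((\<exists>f g h. is_ext R \<eta> Mm (NF_ext \<alpha> \<beta> \<gamma> \<eta> f g h) \<and>
               \<not> trivial_ext R \<eta> Mm (NF_ext \<alpha> \<beta> \<gamma> \<eta> f g h))
        \<longleftrightarrow> (\<exists>f g. lst f g)))"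

end

theory Submission
  imports Defs
begin

text \<open>Choosing a preimage \<open>v\<close> of the generator of \<open>M\<close> splits every extension as
  \<open>\<complex>c\<^sub>\<eta> \<oplus> \<complex>[\<partial>]v\<close>, where it is determined by the polynomials \<open>f, g, h\<close> giving the
  \<open>c\<^sub>\<eta>\<close>-components of \<open>L\<^sub>\<lambda> v, Y\<^sub>\<lambda> v, M\<^sub>\<lambda> v\<close>; replacing \<open>v\<close> by \<open>v + t c\<^sub>\<eta>\<close> changes \<open>f\<close> by
  \<open>t (\<eta> + \<beta> + \<alpha> \<lambda>)\<close> and \<open>g\<close> by \<open>t \<gamma>\<close>, and the extension splits iff it can be brought to \<open>f = g = h = 0\<close>.
  The bracket \<open>[Y\<^sub>\<lambda> Y]\<close> forces \<open>h = 0\<close>. For \<open>\<gamma> = 0\<close> the module axioms reduce to one functional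
  equation for \<open>f\<close> (from \<open>[L\<^sub>\<lambda> L]\<close>) and one for \<open>g\<close> (from \<open>[L\<^sub>\<lambda> Y]\<close>). Modulo the shifts, the
  first has only the solutions \<open>0\<close>, \<open>c \<lambda>\<^sup>2\<close> (\<open>\<alpha> = 1\<close>) and \<open>c \<lambda>\<^sup>3\<close> (\<open>\<alpha> = 2\<close>), and only when \<open>\<eta> + \<beta> = 0\<close>;
  setting \<open>\<mu> = 0\<close> (or \<open>\<lambda> = -\<mu>\<close> for \<open>TSV(1,0)\<close>) in the second bounds the degree of \<open>g\<close> by one,
  after which comparing coefficients leaves the listed cases. For \<open>TSV(1,0)\<close> with \<open>\<gamma> \<noteq> 0\<close>, \<open>[Y\<^sub>\<lambda> Y]\<close> makes \<open>g\<close> constant and \<open>[L\<^sub>\<lambda> Y]\<close>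
  then makes \<open>f\<close> a shift, so every extension splits.\<close>

lemma is_cmod_transport:
  fixes V :: "'a::ab_group_add cmod" and W :: "'b::ab_group_add cmod"
  assumes cm: "is_cmod R V" and bij: "bij \<phi>"
    and add: "\<And>a b. \<phi> (a + b) = \<phi> a + \<phi> b"
    and sc: "\<And>c a. \<phi> (sc V c a) = sc W c (\<phi> a)"
    and dd: "\<And>a. \<phi> (dd V a) = dd W (\<phi> a)"
    and act: "\<And>x l a. \<phi> (act V x l a) = act W x l (\<phi> a)"
  shows "is_cmod R W"
proof -
  interpret additive \<phi> by unfold_locales (rule add)
  have all_W: "(\<forall>w. P w) \<longleftrightarrow> (\<forall>a. P (\<phi> a))" for P
    using bij by (metis bij_pointE)
  have sum: "\<phi> (\<Sum>i\<le>n. sc V (l ^ i) (c i)) = (\<Sum>i\<le>n. sc W (l ^ i) (\<phi> (c i)))" for n l c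
    by (simp add: local.sum sc)
  note to_V = add[symmetric] sc[symmetric] dd[symmetric] act[symmetric] diff[symmetric] zero[symmetric]
  have "vector_space (sc W)" "is_lin (sc W) (sc W) (dd W)" "\<forall>x l. is_lin (sc W) (sc W) (act W x l)"
    using cm unfolding is_cmod_def vector_space_def is_lin_def all_W by (simp_all add: to_V)
  moreover have "\<forall>x w. \<exists>n (c :: nat \<Rightarrow> 'b). \<forall>l. act W x l w = (\<Sum>i\<le>n. sc W (l ^ i) (c i))"
    unfolding all_W
  proof (intro allI)
    fix x a
    obtain n c where "\<forall>l. act V x l a = (\<Sum>i\<le>n. sc V (l ^ i) (c i))"
      using cm unfolding is_cmod_def by blast
    then have "\<forall>l. act W x l (\<phi> a) = (\<Sum>i\<le>n. sc W (l ^ i) (\<phi> (c i)))"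
      by (simp add: act[symmetric] sum)
    then show "\<exists>n c. \<forall>l. act W x l (\<phi> a) = (\<Sum>i\<le>n. sc W (l ^ i) (c i))"
      by (intro exI[of _ n] exI[of _ "\<lambda>i. \<phi> (c i)"])
  qed
  moreover have "\<forall>x l w. act W x l (dd W w) = dd W (act W x l w) + sc W l (act W x l w)"
    "\<forall>l m w.
        act W L l (act W L m w) - act W L m (act W L l w) = sc W (bLL R (-(l+m)) l) (act W L (l+m) w) \<and>
        act W L l (act W Y m w) - act W Y m (act W L l w) = sc W (bLY R (-(l+m)) l) (act W Y (l+m) w) \<and>
        act W L l (act W M m w) - act W M m (act W L l w) = sc W (bLM R (-(l+m)) l) (act W M (l+m) w) \<and>
        act W Y l (act W Y m w) - act W Y m (act W Y l w) = sc W (bYY R (-(l+m)) l) (act W M (l+m) w) \<and>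
        act W Y l (act W M m w) - act W M m (act W Y l w) = 0 \<and>
        act W M l (act W M m w) - act W M m (act W M l w) = 0"
    using cm unfolding is_cmod_def all_W by (simp_all add: to_V)
  ultimately show ?thesis unfolding is_cmod_def by blast
qed

lemma NF_simps:
  "sc (NF \<alpha> \<beta> \<gamma> \<eta> f g h) c w = (c * fst w, smult c (snd w))"
  "dd (NF \<alpha> \<beta> \<gamma> \<eta> f g h) w = (\<eta> * fst w, [:0, 1:] * snd w)"
  "act (NF \<alpha> \<beta> \<gamma> \<eta> f g h) L l w =
     (poly (snd w) (\<eta> + l) * poly f l, pcompose (snd w) [:l, 1:] * [:\<alpha> * l + \<beta>, 1:])"
  "act (NF \<alpha> \<beta> \<gamma> \<eta> f g h) Y l w = (poly (snd w) (\<eta> + l) * poly g l, smult \<gamma> (pcompose (snd w) [:l, 1:]))"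
  "act (NF \<alpha> \<beta> \<gamma> \<eta> f g h) M l w = (poly (snd w) (\<eta> + l) * poly h l, 0)"
  by (cases w; simp add: NF_def)+

lemma Mabg_simps:
  "sc (Mabg \<alpha> \<beta> \<gamma>) = smult"
  "dd (Mabg \<alpha> \<beta> \<gamma>) q = [:0, 1:] * q"
  "act (Mabg \<alpha> \<beta> \<gamma>) L l q = pcompose q [:l, 1:] * [:\<alpha> * l + \<beta>, 1:]"
  "act (Mabg \<alpha> \<beta> \<gamma>) Y l q = smult \<gamma> (pcompose q [:l, 1:])"
  "act (Mabg \<alpha> \<beta> \<gamma>) M l q = 0"
  by (simp_all add: Mabg_def)

lemma Ceta_simps:
  "sc (Ceta \<eta>) c x = c * x" "dd (Ceta \<eta>) x = \<eta> * x" "act (Ceta \<eta>) z l x = 0"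
  by (simp_all add: Ceta_def)

lemma is_ext_NF_ext_iff:
  "is_ext R \<eta> (Mabg \<alpha> \<beta> \<gamma>) (NF_ext \<alpha> \<beta> \<gamma> \<eta> f g h) \<longleftrightarrow> is_cmod R (NF \<alpha> \<beta> \<gamma> \<eta> f g h)"
proof -
  have "is_hom (Ceta \<eta>) (NF \<alpha> \<beta> \<gamma> \<eta> f g h) (\<lambda>x. (x, 0))"
    unfolding is_hom_def is_lin_def
    by (auto simp: NF_simps Ceta_simps split: gen.split) (case_tac x; simp add: NF_simps)
  moreover have "is_hom (NF \<alpha> \<beta> \<gamma> \<eta> f g h) (Mabg \<alpha> \<beta> \<gamma>) snd"
    unfolding is_hom_def is_lin_def
    by (auto simp: NF_simps Mabg_simps) (case_tac x; simp add: NF_simps Mabg_simps)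
  moreover have "range (\<lambda>x::complex. (x, 0::complex poly)) = {v. snd v = 0}"
    by force
  ultimately show ?thesis
    unfolding is_ext_def NF_ext_def by (simp add: inj_on_def surj_def)
qed

lemma split_ext_eq_NF_ext: "split_ext \<eta> (Mabg \<alpha> \<beta> \<gamma>) = NF_ext \<alpha> \<beta> \<gamma> \<eta> 0 0 0"
  unfolding split_ext_def NF_ext_def dsum_def NF_def Ceta_def Mabg_def
  by (auto simp: fun_eq_iff split: gen.split)

lemma ext_equiv_trans:
  assumes "ext_equiv R \<eta> Mm E1 E2" "ext_equiv R \<eta> Mm E2 E3"
  shows "ext_equiv R \<eta> Mm E1 E3"
proof -
  obtain V1 i1 p1 V2 i2 p2 V3 i3 p3 where E: "E1 = (V1, i1, p1)" "E2 = (V2, i2, p2)" "E3 = (V3, i3, p3)"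
    by (cases E1, cases E2, cases E3) auto
  from assms obtain \<phi> \<psi> where
    "is_hom V1 V2 \<phi>" "\<forall>x. \<phi> (i1 x) = i2 x" "\<forall>v. p2 (\<phi> v) = p1 v"
    "is_hom V2 V3 \<psi>" "\<forall>x. \<psi> (i2 x) = i3 x" "\<forall>v. p3 (\<psi> v) = p2 v"
    unfolding ext_equiv_def E by auto
  then have "is_hom V1 V3 (\<psi> \<circ> \<phi>) \<and> (\<forall>x. (\<psi> \<circ> \<phi>) (i1 x) = i3 x) \<and> (\<forall>v. p3 ((\<psi> \<circ> \<phi>) v) = p1 v)"
    unfolding is_hom_def is_lin_def by simp
  then show ?thesis using assms unfolding ext_equiv_def E by auto
qed

text \<open>The isomorphism is the change of generator \<open>v \<mapsto> v + t c\<^sub>\<eta>\<close>.\<close>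
lemma NF_ext_equiv_shift:
  assumes ext: "is_ext R \<eta> (Mabg \<alpha> \<beta> \<gamma>) (NF_ext \<alpha> \<beta> \<gamma> \<eta> f g h)"
  shows "ext_equiv R \<eta> (Mabg \<alpha> \<beta> \<gamma>) (NF_ext \<alpha> \<beta> \<gamma> \<eta> f g h)
           (NF_ext \<alpha> \<beta> \<gamma> \<eta> (f + smult t [:\<eta> + \<beta>, \<alpha>:]) (g + [:t * \<gamma>:]) h)"
proof -
  define N where "N = NF \<alpha> \<beta> \<gamma> \<eta> f g h"
  define N' where "N' = NF \<alpha> \<beta> \<gamma> \<eta> (f + smult t [:\<eta> + \<beta>, \<alpha>:]) (g + [:t * \<gamma>:]) h"
  define \<phi> :: "complex \<times> complex poly \<Rightarrow> complex \<times> complex poly" where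
    "\<phi> = (\<lambda>w. (fst w + t * poly (snd w) \<eta>, snd w))"
  have "bij \<phi>"
    by (rule bij_betw_byWitness[of _ "\<lambda>w. (fst w - t * poly (snd w) \<eta>, snd w)"]) (auto simp: \<phi>_def)
  moreover have add: "\<phi> (a + b) = \<phi> a + \<phi> b" for a b
    unfolding \<phi>_def by (simp add: algebra_simps)
  moreover have sc: "\<phi> (sc N c a) = sc N' c (\<phi> a)" for c a
    unfolding \<phi>_def N_def N'_def by (simp add: NF_simps algebra_simps)
  moreover have dd: "\<phi> (dd N a) = dd N' (\<phi> a)" for a
    unfolding \<phi>_def N_def N'_def by (simp add: NF_simps algebra_simps)
  moreover have act: "\<phi> (act N x l a) = act N' x l (\<phi> a)" for x l a
    unfolding \<phi>_def N_def N'_def by (cases x) (simp_all add: NF_simps poly_pcompose algebra_simps)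
  ultimately have "is_cmod R N'"
    using is_cmod_transport ext is_ext_NF_ext_iff N_def by metis
  moreover have "is_hom N N' \<phi>"
    unfolding is_hom_def is_lin_def using add sc dd act by blast
  ultimately show ?thesis using ext is_ext_NF_ext_iff unfolding ext_equiv_def NF_ext_def N_def N'_def
    by (auto simp: \<phi>_def)
qed

lemma trivial_NF_ext_iff:
  assumes ext: "is_ext R \<eta> (Mabg \<alpha> \<beta> \<gamma>) (NF_ext \<alpha> \<beta> \<gamma> \<eta> f g h)"
  shows "trivial_ext R \<eta> (Mabg \<alpha> \<beta> \<gamma>) (NF_ext \<alpha> \<beta> \<gamma> \<eta> f g h) \<longleftrightarrow>
           (\<exists>t. f = smult t [:\<eta> + \<beta>, \<alpha>:] \<and> g = [:t * \<gamma>:] \<and> h = 0)"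
proof
  assume "\<exists>t. f = smult t [:\<eta> + \<beta>, \<alpha>:] \<and> g = [:t * \<gamma>:] \<and> h = 0"
  then obtain t where "f = smult t [:\<eta> + \<beta>, \<alpha>:]" "g = [:t * \<gamma>:]" "h = 0"
    by blast
  then have "f + smult (-t) [:\<eta> + \<beta>, \<alpha>:] = 0" "g + [:-t * \<gamma>:] = 0" "h = 0"
    by simp_all
  then show "trivial_ext R \<eta> (Mabg \<alpha> \<beta> \<gamma>) (NF_ext \<alpha> \<beta> \<gamma> \<eta> f g h)"
    using NF_ext_equiv_shift[OF ext, of "-t"] unfolding trivial_ext_def split_ext_eq_NF_ext by simp
next
  define N where "N = NF \<alpha> \<beta> \<gamma> \<eta> f g h"
  define N0 where "N0 = NF \<alpha> \<beta> \<gamma> \<eta> 0 0 0"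
  assume "trivial_ext R \<eta> (Mabg \<alpha> \<beta> \<gamma>) (NF_ext \<alpha> \<beta> \<gamma> \<eta> f g h)"
  then obtain \<phi> where hom: "is_hom N N0 \<phi>"
    and fix_c: "\<And>x. \<phi> (x, 0) = (x, 0)" and keep_snd: "\<And>w. snd (\<phi> w) = snd w"
    unfolding trivial_ext_def split_ext_eq_NF_ext ext_equiv_def NF_ext_def N_def N0_def by auto
  define s where "s = fst (\<phi> (0, 1))"
  have \<phi>_v: "\<phi> (0, 1) = (s, 1)"
    using keep_snd[of "(0, 1)"] unfolding s_def by (simp add: prod_eq_iff)
  have add: "\<phi> (a + b) = \<phi> a + \<phi> b" for a b
    using hom unfolding is_hom_def is_lin_def by blast
  have \<phi>_poly: "fst (\<phi> (0, q)) = s * poly q \<eta>" for q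
  proof (induction q)
    case (pCons a q)
    have "(0, pCons a q) = sc N a (0, 1) + dd N (0, q)"
      unfolding N_def by (simp add: NF_simps)
    then have "\<phi> (0, pCons a q) = sc N0 a (s, 1) + dd N0 (\<phi> (0, q))"
      using hom \<phi>_v add unfolding is_hom_def is_lin_def by metis
    then show ?case using pCons.IH unfolding N0_def by (simp add: NF_simps algebra_simps)
  qed (simp add: fix_c)
  have key: "fst (act N z l (0, 1)) = - s * poly (snd (act N z l (0, 1))) \<eta>" for z l
  proof -
    have "act N z l (0, 1) = (fst (act N z l (0, 1)), 0) + (0, snd (act N z l (0, 1)))"
      by simp
    then have "\<phi> (act N z l (0, 1)) = (fst (act N z l (0, 1)), 0) + \<phi> (0, snd (act N z l (0, 1)))"
      using add fix_c by metis
    moreover have "\<phi> (act N z l (0, 1)) = act N0 z l (s, 1)"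
      using hom \<phi>_v unfolding is_hom_def by metis
    moreover have "fst (act N0 z l (s, 1)) = 0"
      unfolding N0_def by (cases z) (simp_all add: NF_simps)
    ultimately show ?thesis using \<phi>_poly by (simp add: eq_neg_iff_add_eq_0)
  qed
  have "poly f = poly (smult (-s) [:\<eta> + \<beta>, \<alpha>:])" "poly g = poly [:-s * \<gamma>:]" "poly h = poly 0"
    using key[of L] key[of Y] key[of M] unfolding N_def
    by (simp_all add: fun_eq_iff NF_simps pcompose_1 algebra_simps)
  then show "\<exists>t. f = smult t [:\<eta> + \<beta>, \<alpha>:] \<and> g = [:t * \<gamma>:] \<and> h = 0"
    by (metis poly_eq_poly_eq_iff)
qed

lemma is_cmod_NF_identities:
  assumes "is_cmod R (NF \<alpha> \<beta> \<gamma> \<eta> f g h)"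
  shows "(\<eta> + \<beta> + l + \<alpha> * m) * poly f l - (\<eta> + \<beta> + m + \<alpha> * l) * poly f m = bLL R (-(l+m)) l * poly f (l + m)"
    and "\<gamma> * poly f l - (\<eta> + \<beta> + m + \<alpha> * l) * poly g m = bLY R (-(l+m)) l * poly g (l + m)"
    and "\<gamma> * (poly g l - poly g m) = bYY R (-(l+m)) l * poly h (l + m)"
    and "\<gamma> * poly h m = 0"
proof -
  note brackets = assms[unfolded is_cmod_def, THEN conjunct2, THEN conjunct2, THEN conjunct2,
      THEN conjunct2, THEN conjunct2, rule_format, of _ _ "(0, 1)"]
  show "(\<eta> + \<beta> + l + \<alpha> * m) * poly f l - (\<eta> + \<beta> + m + \<alpha> * l) * poly f m = bLL R (-(l+m)) l * poly f (l + m)"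
    "\<gamma> * poly f l - (\<eta> + \<beta> + m + \<alpha> * l) * poly g m = bLY R (-(l+m)) l * poly g (l + m)"
    "\<gamma> * (poly g l - poly g m) = bYY R (-(l+m)) l * poly h (l + m)"
    "\<gamma> * poly h m = 0"
    using brackets[of l m] brackets[of 0 m]
    by (simp_all add: NF_simps poly_pcompose pcompose_1 algebra_simps zero_prod_def)
qed

lemma pair_poly_as_sum:
  fixes A :: "complex poly" and B :: "complex poly poly"
  assumes "degree A \<le> n" "degree B \<le> n"
  shows "(poly A l, poly B [:l:]) = (\<Sum>i\<le>n. (l ^ i * coeff A i, smult (l ^ i) (coeff B i)))"
proof -
  have "poly A l = poly (\<Sum>i\<le>n. monom (coeff A i) i) l"
    by (simp only: poly_as_sum_of_monoms'[OF assms(1)])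
  also have "\<dots> = (\<Sum>i\<le>n. l ^ i * coeff A i)"
    by (simp add: poly_sum poly_monom mult.commute)
  finally have "poly A l = (\<Sum>i\<le>n. l ^ i * coeff A i)" .
  moreover have "poly B [:l:] = poly (\<Sum>i\<le>n. monom (coeff B i) i) [:l:]"
    by (simp only: poly_as_sum_of_monoms'[OF assms(2)])
  then have "poly B [:l:] = (\<Sum>i\<le>n. smult (l ^ i) (coeff B i))"
    by (simp add: poly_sum poly_monom poly_const_pow mult.commute)
  ultimately show ?thesis by (simp add: sum_prod)
qed

text \<open>The \<open>\<lambda>\<close>-dependence of \<open>q(\<partial> + \<lambda>)\<close> is polynomial: it is a polynomial in \<open>[:\<lambda>:]\<close>
  with coefficients in \<open>\<complex>[\<partial>]\<close>.\<close>
lemma pcompose_shift_as_poly: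
  "pcompose q [:l, 1:] = poly (pcompose (map_poly (\<lambda>c. [:c:]) q) [:[:0, 1:], 1:]) [:l:]"
  by (simp add: poly_pcompose pcompose_altdef[symmetric])

lemma NF_act_as_pair_poly:
  "\<exists>A B. \<forall>l. act (NF \<alpha> \<beta> \<gamma> \<eta> f g h) z l w = (poly A l, poly B [:l:])"
proof -
  define B where "B = pcompose (map_poly (\<lambda>c. [:c:]) (snd w)) [:[:0, 1:], 1:]"
  define A where "A = (\<lambda>F. pcompose (snd w) [:\<eta>, 1:] * F)"
  have A: "poly (A F) l = poly (snd w) (\<eta> + l) * poly F l" for F l
    unfolding A_def by (simp add: poly_pcompose add.commute)
  have B: "pcompose (snd w) [:l, 1:] = poly B [:l:]" for l
    unfolding B_def by (rule pcompose_shift_as_poly)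
  show ?thesis
  proof (cases z)
    case L
    have "[:\<alpha> * l + \<beta>, 1:] = poly [:[:\<beta>, 1:], [:\<alpha>:]:] [:l:]" for l by simp
    then show ?thesis using L A B
      by (intro exI[of _ "A f"] exI[of _ "B * [:[:\<beta>, 1:], [:\<alpha>:]:]"]) (simp add: NF_simps smult_add_left)
  next
    case Y
    then show ?thesis using A B
      by (intro exI[of _ "A g"] exI[of _ "smult [:\<gamma>:] B"]) (simp add: NF_simps)
  next
    case M
    then show ?thesis using A
      by (intro exI[of _ "A h"] exI[of _ 0]) (simp add: NF_simps)
  qed
qed

lemma NF_module_axioms:
  fixes \<alpha> \<beta> \<gamma> \<eta> :: complex and f g h :: "complex poly"
  defines "N \<equiv> NF \<alpha> \<beta> \<gamma> \<eta> f g h"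
  shows "vector_space (sc N)" and "is_lin (sc N) (sc N) (dd N)"
    and "\<forall>x l. is_lin (sc N) (sc N) (act N x l)"
    and "\<forall>x v. \<exists>n (c :: nat \<Rightarrow> _). \<forall>l. act N x l v = (\<Sum>i\<le>n. sc N (l ^ i) (c i))"
    and "\<forall>x l v. act N x l (dd N v) = dd N (act N x l v) + sc N l (act N x l v)"
proof -
  show "vector_space (sc N)"
    unfolding vector_space_def N_def by (auto simp: NF_simps algebra_simps smult_add_right smult_add_left)
  show "is_lin (sc N) (sc N) (dd N)"
    unfolding is_lin_def N_def by (simp add: NF_simps algebra_simps)
  show "\<forall>x l. is_lin (sc N) (sc N) (act N x l)"
    unfolding is_lin_def N_def
    by (intro allI, case_tac x) (simp_all add: NF_simps pcompose_add pcompose_smult algebra_simps smult_add_right)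
  show "\<forall>x v. \<exists>n c. \<forall>l. act N x l v = (\<Sum>i\<le>n. sc N (l ^ i) (c i))"
  proof (intro allI)
    fix x v
    obtain A B where AB: "\<forall>l. act N x l v = (poly A l, poly B [:l:])"
      unfolding N_def using NF_act_as_pair_poly by blast
    show "\<exists>n c. \<forall>l. act N x l v = (\<Sum>i\<le>n. sc N (l ^ i) (c i))"
      using AB pair_poly_as_sum[of A "max (degree A) (degree B)" B]
      by (intro exI[of _ "max (degree A) (degree B)"] exI[of _ "\<lambda>i. (coeff A i, coeff B i)"])
        (simp add: N_def NF_simps)
  qed
  show "\<forall>x l v. act N x l (dd N v) = dd N (act N x l v) + sc N l (act N x l v)"
    unfolding N_def
    by (intro allI, case_tac x) (simp_all add: NF_simps pcompose_pCons algebra_simps smult_add_right)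
qed

text \<open>For \<open>\<gamma> = 0\<close> and \<open>h = 0\<close> the bracket identities of a normal form reduce to the first
  components of \<open>[L\<^sub>\<lambda> L]\<close> and \<open>[L\<^sub>\<lambda> Y]\<close> applied to \<open>v\<close>, where \<open>e = \<eta> + \<beta>\<close>.\<close>
definition L_cocycle :: "complex \<Rightarrow> complex \<Rightarrow> complex poly \<Rightarrow> bool" where
  "L_cocycle e \<alpha> f \<longleftrightarrow>
     (\<forall>l m. (e + l + \<alpha> * m) * poly f l - (e + m + \<alpha> * l) * poly f m = (l - m) * poly f (l + m))"

definition Y_cocycle :: "alg \<Rightarrow> complex \<Rightarrow> complex \<Rightarrow> complex poly \<Rightarrow> bool" where
  "Y_cocycle R e \<alpha> g \<longleftrightarrow>
     (\<forall>l m. (e + m + \<alpha> * l) * poly g m + bLY R (-(l+m)) l * poly g (l + m) = 0)"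

lemma is_cmod_NF_iff_cocycles:
  assumes bLL: "\<And>d l. bLL R d l = d + 2 * l"
  shows "is_cmod R (NF \<alpha> \<beta> 0 \<eta> f g 0) \<longleftrightarrow> L_cocycle (\<eta> + \<beta>) \<alpha> f \<and> Y_cocycle R (\<eta> + \<beta>) \<alpha> g"
proof
  assume "is_cmod R (NF \<alpha> \<beta> 0 \<eta> f g 0)"
  from is_cmod_NF_identities(1,2)[OF this] show "L_cocycle (\<eta> + \<beta>) \<alpha> f \<and> Y_cocycle R (\<eta> + \<beta>) \<alpha> g"
    unfolding L_cocycle_def Y_cocycle_def by (simp add: bLL add_eq_0_iff)
next
  define N where "N = NF \<alpha> \<beta> 0 \<eta> f g 0"
  assume "L_cocycle (\<eta> + \<beta>) \<alpha> f \<and> Y_cocycle R (\<eta> + \<beta>) \<alpha> g"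
  then have LL: "(\<eta> + \<beta> + l + \<alpha> * m) * poly f l - (\<eta> + \<beta> + m + \<alpha> * l) * poly f m = (l - m) * poly f (l + m)"
    and LY: "(\<eta> + \<beta> + m + \<alpha> * l) * poly g m + bLY R (-(l+m)) l * poly g (l + m) = 0" for l m
    unfolding L_cocycle_def Y_cocycle_def by blast+
  have "act N L l (act N L m v) - act N L m (act N L l v) = sc N (bLL R (-(l+m)) l) (act N L (l+m) v)"
    and "act N L l (act N Y m v) - act N Y m (act N L l v) = sc N (bLY R (-(l+m)) l) (act N Y (l+m) v)"
    for l m v
  proof -
    define Q where "Q = poly (snd v) (\<eta> + l + m)"
    have "poly (pcompose (snd v) [:m, 1:] * [:\<alpha> * m + \<beta>, 1:]) (\<eta> + l) * poly f l
          - poly (pcompose (snd v) [:l, 1:] * [:\<alpha> * l + \<beta>, 1:]) (\<eta> + m) * poly f m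
        = Q * ((\<eta> + \<beta> + l + \<alpha> * m) * poly f l - (\<eta> + \<beta> + m + \<alpha> * l) * poly f m)"
      unfolding Q_def by (simp add: poly_pcompose algebra_simps)
    also have "\<dots> = bLL R (-(l+m)) l * (poly (snd v) (\<eta> + (l + m)) * poly f (l + m))"
      unfolding LL Q_def by (simp add: bLL algebra_simps)
    finally show "act N L l (act N L m v) - act N L m (act N L l v) = sc N (bLL R (-(l+m)) l) (act N L (l+m) v)"
      unfolding N_def
      by (simp add: NF_simps bLL poly_eq_poly_eq_iff[symmetric] fun_eq_iff poly_pcompose algebra_simps)
    have "- (poly (pcompose (snd v) [:l, 1:] * [:\<alpha> * l + \<beta>, 1:]) (\<eta> + m) * poly g m)
        = - Q * ((\<eta> + \<beta> + m + \<alpha> * l) * poly g m)"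
      unfolding Q_def by (simp add: poly_pcompose algebra_simps)
    also have "\<dots> = - Q * - (bLY R (-(l+m)) l * poly g (l + m))"
      using LY[where l = l and m = m] by (simp add: add_eq_0_iff2)
    also have "\<dots> = bLY R (-(l+m)) l * (poly (snd v) (\<eta> + (l + m)) * poly g (l + m))"
      unfolding Q_def by (simp add: algebra_simps)
    finally show "act N L l (act N Y m v) - act N Y m (act N L l v) = sc N (bLY R (-(l+m)) l) (act N Y (l+m) v)"
      unfolding N_def by (simp add: NF_simps)
  qed
  then show "is_cmod R N"
    unfolding is_cmod_def using NF_module_axioms[of \<alpha> \<beta> 0 \<eta> f g 0] unfolding N_def
    by (simp add: NF_simps zero_prod_def)
qed

locale conformal_extension =
  fixes R :: alg and \<eta> \<alpha> \<beta> \<gamma> :: complex and V :: "'v::ab_group_add cmod"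
    and i :: "complex \<Rightarrow> 'v" and p :: "'v \<Rightarrow> complex poly"
  assumes ext: "is_ext R \<eta> (Mabg \<alpha> \<beta> \<gamma>) (V, i, p)"
begin

lemma cmod: "is_cmod R V"
  using ext unfolding is_ext_def by simp

sublocale vs: vector_space "sc V"
  using cmod unfolding is_cmod_def by blast

lemma i_hom: "i (a + b) = i a + i b" "i (c * x) = sc V c (i x)" "i (\<eta> * x) = dd V (i x)"
    "act V z l (i x) = i 0"
  and p_hom: "p (a' + b') = p a' + p b'" "p (sc V c w) = smult c (p w)" "p (dd V w) = [:0, 1:] * p w"
    "p (act V z l w) = act (Mabg \<alpha> \<beta> \<gamma>) z l (p w)"
  and dd_lin: "dd V (a' + b') = dd V a' + dd V b'" "dd V (sc V c w) = sc V c (dd V w)"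
  and act_lin: "act V z l (a' + b') = act V z l a' + act V z l b'" "act V z l (sc V c w) = sc V c (act V z l w)"
  and dd_act: "act V z l (dd V w) = dd V (act V z l w) + sc V l (act V z l w)"
  using ext cmod unfolding is_ext_def is_hom_def is_lin_def is_cmod_def by (auto simp: Ceta_simps Mabg_simps)

sublocale i: additive i by unfold_locales (rule i_hom(1))
sublocale p: additive p by unfold_locales (rule p_hom(1))
sublocale dd: additive "dd V" by unfold_locales (rule dd_lin(1))
sublocale act: additive "act V z l" for z l by unfold_locales (rule act_lin(1))

lemma act_i [simp]: "act V z l (i x) = 0"
  using i_hom(4) i.zero by simp

lemma kernel_p: "p w = 0 \<longleftrightarrow> w \<in> range i"
  using ext unfolding is_ext_def by auto

definition v0 :: 'v where "v0 = (SOME v. p v = 1)"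

lemma p_v0: "p v0 = 1"
proof -
  have "surj p" using ext unfolding is_ext_def by simp
  then have "\<exists>v. p v = 1" by (metis surjD)
  then show ?thesis unfolding v0_def by (rule someI_ex)
qed

text \<open>\<open>lift q = q(\<partial>) v0\<close>.\<close>
definition lift :: "complex poly \<Rightarrow> 'v" where
  "lift q = (\<Sum>k\<le>degree q. sc V (coeff q k) ((dd V ^^ k) v0))"

lemma lift_eq_sum:
  assumes "degree q \<le> n" shows "lift q = (\<Sum>k\<le>n. sc V (coeff q k) ((dd V ^^ k) v0))"
  unfolding lift_def by (rule sum.mono_neutral_left) (use assms in \<open>auto simp: coeff_eq_0\<close>)

lemma lift_add: "lift (q1 + q2) = lift q1 + lift q2"
proof -
  define n where "n = degree q1 + degree q2"
  have "degree (q1 + q2) \<le> n" "degree q1 \<le> n" "degree q2 \<le> n"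
    unfolding n_def using degree_add_le[of q1 n q2] by (simp_all add: n_def)
  then show ?thesis by (simp add: lift_eq_sum vs.scale_left_distrib sum.distrib)
qed

lemma lift_smult: "lift (smult c q) = sc V c (lift q)"
  using lift_eq_sum[of "smult c q" "degree q"] unfolding lift_def by (simp add: vs.scale_sum_right)

lemma lift_pCons_0: "lift (pCons 0 q) = dd V (lift q)"
proof -
  have "lift (pCons 0 q) = (\<Sum>k\<le>Suc (degree q). sc V (coeff (pCons 0 q) k) ((dd V ^^ k) v0))"
    by (rule lift_eq_sum) simp
  also have "\<dots> = (\<Sum>k\<le>degree q. sc V (coeff q k) ((dd V ^^ Suc k) v0))"
    by (simp add: sum.atMost_Suc_shift del: sum.atMost_Suc)
  finally show ?thesis unfolding lift_def by (simp add: dd.sum dd_lin(2))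
qed

lemma p_lift: "p (lift q) = q"
proof -
  have "p ((dd V ^^ k) v0) = monom 1 k" for k
    by (induction k) (simp_all add: p_v0 p_hom(3) monom_Suc)
  then show ?thesis
    unfolding lift_def by (simp add: p.sum p_hom(2) smult_monom poly_as_sum_of_monoms)
qed

definition c_coord :: "'v \<Rightarrow> complex" where
  "c_coord w = (THE x. i x = w - lift (p w))"

lemma inj_i: "inj i"
  using ext unfolding is_ext_def by simp

lemma c_coord_unique:
  assumes "i x = w - lift (p w)" shows "c_coord w = x"
  unfolding c_coord_def
  by (rule the_equality) (use assms inj_i in \<open>metis injD\<close>)+

lemma c_coord: "i (c_coord w) = w - lift (p w)"
proof -
  have "p (w - lift (p w)) = 0"
    by (simp add: p.diff p_lift)
  then have "w - lift (p w) \<in> range i"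
    using kernel_p by blast
  then obtain x where "i x = w - lift (p w)" by (metis rangeE)
  then show ?thesis using c_coord_unique by simp
qed

lemma decompose: "w = i (c_coord w) + lift (p w)"
  using c_coord by simp

lemma c_coord_add: "c_coord (a + b) = c_coord a + c_coord b"
  by (rule c_coord_unique) (simp add: i.add c_coord p.add lift_add algebra_simps)

sublocale c_coord: additive c_coord by unfold_locales (rule c_coord_add)

lemma c_coord_sc: "c_coord (sc V c w) = c * c_coord w"
  by (rule c_coord_unique) (simp add: i_hom(2) c_coord p_hom(2) lift_smult vs.scale_right_diff_distrib)

lemma c_coord_dd: "c_coord (dd V w) = \<eta> * c_coord w"
  by (rule c_coord_unique) (simp add: i_hom(3) c_coord dd.diff p_hom(3) lift_pCons_0)

lemma c_coord_i: "c_coord (i x) = x"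
proof (rule c_coord_unique)
  have "p (i x) = 0" using kernel_p by blast
  then show "i x = i x - lift (p (i x))" by (simp add: lift_def)
qed

lemma c_coord_lift: "c_coord (lift q) = 0"
  by (rule c_coord_unique) (simp add: p_lift i.zero)

definition cocycle :: "gen \<Rightarrow> complex \<Rightarrow> complex" where
  "cocycle z l = c_coord (act V z l v0)"

lemma c_coord_act: "c_coord (act V z l w) = poly (p w) (\<eta> + l) * cocycle z l"
proof -
  have "c_coord (act V z l ((dd V ^^ k) v0)) = (\<eta> + l) ^ k * cocycle z l" for k
    by (induction k) (simp_all add: cocycle_def dd_act c_coord.add c_coord_dd c_coord_sc algebra_simps)
  then have "c_coord (act V z l (lift q)) = poly q (\<eta> + l) * cocycle z l" for q
    unfolding lift_def
    by (simp add: act.sum c_coord.sum act_lin(2) c_coord_sc poly_altdef sum_distrib_left mult_ac)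
  then show ?thesis
    by (subst decompose[of w]) (simp add: act.add c_coord.add)
qed

lemma cocycle_poly: "\<exists>F. cocycle z = poly F"
proof -
  obtain n c where "\<forall>l. act V z l v0 = (\<Sum>k\<le>n. sc V (l ^ k) (c k))"
    using cmod unfolding is_cmod_def by blast
  then have "cocycle z = poly (\<Sum>k\<le>n. monom (c_coord (c k)) k)"
    unfolding cocycle_def by (simp add: fun_eq_iff c_coord.sum c_coord_sc poly_sum poly_monom mult.commute)
  then show ?thesis by blast
qed

lemma equiv_NF_ext: "\<exists>f g h. ext_equiv R \<eta> (Mabg \<alpha> \<beta> \<gamma>) (V, i, p) (NF_ext \<alpha> \<beta> \<gamma> \<eta> f g h)"
proof -
  obtain f g h where fgh: "cocycle L = poly f" "cocycle Y = poly g" "cocycle M = poly h"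
    using cocycle_poly by metis
  define N where "N = NF \<alpha> \<beta> \<gamma> \<eta> f g h"
  define \<phi> where "\<phi> = (\<lambda>w. (c_coord w, p w))"
  have "bij \<phi>"
    unfolding \<phi>_def
    by (rule bij_betw_byWitness[of _ "\<lambda>(x, q). i x + lift q"])
      (auto simp: c_coord.add c_coord_i c_coord_lift p.add p_lift decompose[symmetric] kernel_p)
  moreover have add: "\<phi> (a + b) = \<phi> a + \<phi> b" for a b
    unfolding \<phi>_def by (simp add: c_coord.add p.add)
  moreover have sc: "\<phi> (sc V c a) = sc N c (\<phi> a)" for c a
    unfolding \<phi>_def N_def by (simp add: c_coord_sc p_hom(2) NF_simps)
  moreover have dd: "\<phi> (dd V a) = dd N (\<phi> a)" for a
    unfolding \<phi>_def N_def by (simp add: c_coord_dd p_hom(3) NF_simps)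
  moreover have act: "\<phi> (act V x l a) = act N x l (\<phi> a)" for x l a
    unfolding \<phi>_def N_def by (cases x) (simp_all add: c_coord_act p_hom(4) NF_simps Mabg_simps fgh)
  ultimately have "is_cmod R N"
    by (rule is_cmod_transport[OF cmod])
  moreover have "is_hom V N \<phi>"
    unfolding is_hom_def is_lin_def using add sc dd act by blast
  moreover have "\<phi> (i x) = (x, 0)" for x
    unfolding \<phi>_def using kernel_p by (simp add: c_coord_i)
  ultimately have "\<exists>\<phi>. is_hom V N \<phi> \<and> (\<forall>x. \<phi> (i x) = (x, 0)) \<and> (\<forall>w. snd (\<phi> w) = p w)"
    by (intro exI[of _ \<phi>]) (simp add: \<phi>_def)
  with \<open>is_cmod R N\<close> show ?thesis
    using ext is_ext_NF_ext_iff unfolding ext_equiv_def NF_ext_def N_def by auto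
qed

end

lemma ext_equiv_NF_ext:
  assumes "is_ext R \<eta> (Mabg \<alpha> \<beta> \<gamma>) E"
  shows "\<exists>f g h. ext_equiv R \<eta> (Mabg \<alpha> \<beta> \<gamma>) E (NF_ext \<alpha> \<beta> \<gamma> \<eta> f g h)"
proof -
  obtain V i p where E: "E = (V, i, p)" by (cases E) auto
  interpret conformal_extension R \<eta> \<alpha> \<beta> \<gamma> V i p
    using assms E by unfold_locales simp
  show ?thesis using equiv_NF_ext E by simp
qed

lemma classification_intro:
  assumes h_vanishes: "\<And>f g h. is_ext R \<eta> (Mabg \<alpha> \<beta> \<gamma>) (NF_ext \<alpha> \<beta> \<gamma> \<eta> f g h) \<Longrightarrow> h = 0"
    and nontrivial_listed: "\<And>f g. is_ext R \<eta> (Mabg \<alpha> \<beta> \<gamma>) (NF_ext \<alpha> \<beta> \<gamma> \<eta> f g 0) \<Longrightarrow>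
        \<not> trivial_ext R \<eta> (Mabg \<alpha> \<beta> \<gamma>) (NF_ext \<alpha> \<beta> \<gamma> \<eta> f g 0) \<Longrightarrow>
        \<exists>f' g'. lst f' g' \<and> ext_equiv R \<eta> (Mabg \<alpha> \<beta> \<gamma>) (NF_ext \<alpha> \<beta> \<gamma> \<eta> f g 0) (NF_ext \<alpha> \<beta> \<gamma> \<eta> f' g' 0)"
    and listed_nontrivial: "\<And>f g. lst f g \<Longrightarrow> is_ext R \<eta> (Mabg \<alpha> \<beta> \<gamma>) (NF_ext \<alpha> \<beta> \<gamma> \<eta> f g 0) \<and>
        \<not> trivial_ext R \<eta> (Mabg \<alpha> \<beta> \<gamma>) (NF_ext \<alpha> \<beta> \<gamma> \<eta> f g 0)"
  shows "classification TYPE('v::ab_group_add) R \<alpha> \<beta> \<gamma> \<eta> lst"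
proof -
  define Mm where "Mm = Mabg \<alpha> \<beta> \<gamma>"
  have "\<exists>f g. lst f g \<and> ext_equiv R \<eta> Mm E (NF_ext \<alpha> \<beta> \<gamma> \<eta> f g 0)"
    if "is_ext R \<eta> Mm E" "\<not> trivial_ext R \<eta> Mm E" for E :: "'v ext"
  proof -
    obtain f g h where equiv: "ext_equiv R \<eta> Mm E (NF_ext \<alpha> \<beta> \<gamma> \<eta> f g h)"
      using ext_equiv_NF_ext \<open>is_ext R \<eta> Mm E\<close> unfolding Mm_def by blast
    then have NF_ext: "is_ext R \<eta> Mm (NF_ext \<alpha> \<beta> \<gamma> \<eta> f g h)"
      unfolding ext_equiv_def by blast
    then have "h = 0" using h_vanishes Mm_def by blast
    moreover have "\<not> trivial_ext R \<eta> Mm (NF_ext \<alpha> \<beta> \<gamma> \<eta> f g h)"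
      using that(2) equiv ext_equiv_trans unfolding trivial_ext_def by blast
    ultimately show ?thesis
      using nontrivial_listed[of f g] NF_ext equiv ext_equiv_trans unfolding Mm_def by blast
  qed
  moreover have "(\<exists>f g h. is_ext R \<eta> Mm (NF_ext \<alpha> \<beta> \<gamma> \<eta> f g h) \<and> \<not> trivial_ext R \<eta> Mm (NF_ext \<alpha> \<beta> \<gamma> \<eta> f g h))
      \<longleftrightarrow> (\<exists>f g. lst f g)"
  proof
    assume "\<exists>f g h. is_ext R \<eta> Mm (NF_ext \<alpha> \<beta> \<gamma> \<eta> f g h) \<and> \<not> trivial_ext R \<eta> Mm (NF_ext \<alpha> \<beta> \<gamma> \<eta> f g h)"
    then obtain f g h where "is_ext R \<eta> Mm (NF_ext \<alpha> \<beta> \<gamma> \<eta> f g h)" "\<not> trivial_ext R \<eta> Mm (NF_ext \<alpha> \<beta> \<gamma> \<eta> f g h)"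
      by blast
    moreover have "h = 0" using h_vanishes calculation(1) Mm_def by blast
    ultimately show "\<exists>f g. lst f g" using nontrivial_listed Mm_def by blast
  next
    assume "\<exists>f g. lst f g"
    then show "\<exists>f g h. is_ext R \<eta> Mm (NF_ext \<alpha> \<beta> \<gamma> \<eta> f g h) \<and> \<not> trivial_ext R \<eta> Mm (NF_ext \<alpha> \<beta> \<gamma> \<eta> f g h)"
      using listed_nontrivial Mm_def by blast
  qed
  ultimately show ?thesis
    using ext_equiv_NF_ext h_vanishes unfolding classification_def Let_def Mm_def by blast
qed

lemma L_cocycle_diff:
  "L_cocycle e \<alpha> f \<Longrightarrow> L_cocycle e \<alpha> f' \<Longrightarrow> L_cocycle e \<alpha> (f - f')"
  unfolding L_cocycle_def
proof (intro allI)
  fix l m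
  assume "\<forall>l m. (e + l + \<alpha> * m) * poly f l - (e + m + \<alpha> * l) * poly f m = (l - m) * poly f (l + m)"
    and "\<forall>l m. (e + l + \<alpha> * m) * poly f' l - (e + m + \<alpha> * l) * poly f' m = (l - m) * poly f' (l + m)"
  then have "(e + l + \<alpha> * m) * poly f l - (e + m + \<alpha> * l) * poly f m = (l - m) * poly f (l + m)"
    "(e + l + \<alpha> * m) * poly f' l - (e + m + \<alpha> * l) * poly f' m = (l - m) * poly f' (l + m)"
    by blast+
  then show "(e + l + \<alpha> * m) * poly (f - f') l - (e + m + \<alpha> * l) * poly (f - f') m = (l - m) * poly (f - f') (l + m)"
    by (simp add: algebra_simps) algebra
qed

lemma L_cocycle_coboundary: "L_cocycle e \<alpha> (smult t [:e, \<alpha>:])"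
  unfolding L_cocycle_def by (simp add: algebra_simps)

text \<open>Representatives of the classes of \<open>L\<close>-cocycles modulo coboundaries \<open>t (e + \<alpha> \<lambda>)\<close>.\<close>
definition L_reduced :: "complex \<Rightarrow> complex \<Rightarrow> complex poly \<Rightarrow> bool" where
  "L_reduced e \<alpha> f \<longleftrightarrow>
     (if e = 0 \<and> \<alpha> = 1 then \<exists>c. f = monom c 2 else if e = 0 \<and> \<alpha> = 2 then \<exists>c. f = monom c 3 else f = 0)"

lemma L_reduced_0: "L_reduced e \<alpha> 0"
  unfolding L_reduced_def by (auto intro: exI[of _ 0])

lemma L_reduced_nonzero_e: "e \<noteq> 0 \<Longrightarrow> L_reduced e \<alpha> f \<longleftrightarrow> f = 0"
  unfolding L_reduced_def by simp

lemma L_reduced_0_iff: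
  "L_reduced 0 \<alpha> f \<longleftrightarrow>
     (if \<alpha> = 1 then \<exists>c. f = monom c 2 else if \<alpha> = 2 then \<exists>c. f = monom c 3 else f = 0)"
  unfolding L_reduced_def by simp

lemma L_reduced_0_nonzero_iff:
  "L_reduced 0 \<alpha> f \<and> f \<noteq> 0 \<longleftrightarrow>
     (\<alpha> = 1 \<and> (\<exists>c. c \<noteq> 0 \<and> f = monom c 2)) \<or> (\<alpha> = 2 \<and> (\<exists>c. c \<noteq> 0 \<and> f = monom c 3))"
  unfolding L_reduced_def by auto

lemma L_cocycle_if_L_reduced: "L_reduced e \<alpha> f \<Longrightarrow> L_cocycle e \<alpha> f"
  unfolding L_reduced_def L_cocycle_def
  by (auto simp: poly_monom power2_eq_square power3_eq_cube algebra_simps split: if_splits)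

lemma L_reduced_coboundary_eq_0:
  assumes "L_reduced e \<alpha> f" "f = smult t [:e, \<alpha>:]" shows "f = 0"
proof -
  have "coeff f 2 = 0" "coeff f 3 = 0"
    using assms(2) by (simp_all add: eval_nat_numeral)
  then show ?thesis
    using assms(1) unfolding L_reduced_def by (auto split: if_splits)
qed

lemma L_cocycle_nonzero_e:
  assumes "L_cocycle e \<alpha> f" "e \<noteq> 0" shows "f = smult (poly f 0 / e) [:e, \<alpha>:]"
proof (rule poly_ext)
  fix x
  have "(e + x + \<alpha> * 0) * poly f x - (e + 0 + \<alpha> * x) * poly f 0 = (x - 0) * poly f (x + 0)"
    using assms(1) unfolding L_cocycle_def by (rule spec2)
  then have "e * poly f x = (e + \<alpha> * x) * poly f 0"
    by (simp add: algebra_simps)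
  then show "poly f x = poly (smult (poly f 0 / e) [:e, \<alpha>:]) x"
    using assms(2) by (simp add: field_simps)
qed

text \<open>Differentiating the cocycle identity in \<open>m\<close> at \<open>m = 0\<close> gives the Euler-type equation
  \<open>\<lambda> f' = (\<alpha> + 1) f - \<alpha> f'(0) \<lambda>\<close>, so only the coefficient of degree \<open>\<alpha> + 1\<close> can survive above degree 1.\<close>
lemma L_cocycle_0_coeffs:
  assumes cocycle: "L_cocycle 0 \<alpha> f" and "\<alpha> \<noteq> 0"
  shows "coeff f 0 = 0" and "n \<ge> 2 \<Longrightarrow> (of_nat n - \<alpha> - 1) * coeff f n = 0"
proof -
  have LL: "(0 + l + \<alpha> * m) * poly f l - (0 + m + \<alpha> * l) * poly f m = (l - m) * poly f (l + m)" for l m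
    using cocycle unfolding L_cocycle_def by (rule spec2)
  have "poly f 0 = 0"
    using LL[of 1 0] \<open>\<alpha> \<noteq> 0\<close> by simp
  then show "coeff f 0 = 0" by (simp add: poly_0_coeff_0)
  have euler: "l * poly (pderiv f) l = (\<alpha> + 1) * poly f l - \<alpha> * l * poly (pderiv f) 0" for l
  proof -
    define Q where "Q = smult (poly f l) [:l, \<alpha>:] - [:\<alpha> * l, 1:] * f - [:l, -1:] * pcompose f [:l, 1:]"
    have "poly Q m = 0" for m
      using LL[of l m] unfolding Q_def by (simp add: poly_pcompose algebra_simps)
    then have "Q = 0" using poly_all_0_iff_0 by blast
    then have "poly (pderiv Q) 0 = 0" by simp
    moreover have "pderiv Q = smult (poly f l) [:\<alpha>:] - ([:\<alpha> * l, 1:] * pderiv f + f)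
        - ([:l, -1:] * pcompose (pderiv f) [:l, 1:] - pcompose f [:l, 1:])"
      unfolding Q_def
      by (simp add: pderiv_diff pderiv_smult pderiv_mult pderiv_pCons pderiv_pcompose pderiv_add pderiv_minus algebra_simps)
    ultimately show ?thesis using \<open>poly f 0 = 0\<close> by (simp add: poly_pcompose algebra_simps)
  qed
  have "[:0, 1:] * pderiv f = smult (\<alpha> + 1) f - smult (\<alpha> * poly (pderiv f) 0) [:0, 1:]"
    by (rule poly_ext) (simp add: euler algebra_simps)
  then have "coeff ([:0, 1:] * pderiv f) n = coeff (smult (\<alpha> + 1) f - smult (\<alpha> * poly (pderiv f) 0) [:0, 1:]) n"
    by simp
  moreover assume "n \<ge> 2"
  ultimately show "(of_nat n - \<alpha> - 1) * coeff f n = 0"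
    by (cases n) (simp_all add: coeff_pderiv algebra_simps, simp add: coeff_pCons split: nat.splits)
qed

lemma L_cocycle_0_monom:
  assumes cocycle: "L_cocycle 0 (of_nat n - 1) (monom c n)" and "c \<noteq> 0" "n \<ge> 2"
  shows "n = 2 \<or> n = 3"
proof -
  define \<alpha> :: complex where "\<alpha> = of_nat n - 1"
  define s t where "s = (-1 :: complex) ^ n" and "t = (2 :: complex) ^ n"
  have LL: "(0 + l + \<alpha> * m) * (c * l ^ n) - (0 + m + \<alpha> * l) * (c * m ^ n) = (l - m) * (c * (l + m) ^ n)" for l m
    using cocycle unfolding L_cocycle_def \<alpha>_def poly_monom by (rule spec2)
  have "(1 - \<alpha>) * c - (\<alpha> - 1) * (c * s) = 0"
    using LL[of 1 "-1"] \<open>n \<ge> 2\<close> unfolding s_def by simp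
  then have "c * ((1 - \<alpha>) * (1 + s)) = 0" by algebra
  then have s: "(1 - \<alpha>) * (1 + s) = 0" using \<open>c \<noteq> 0\<close> by simp
  have "(2 - \<alpha>) * (c * t) - (\<alpha> * 2 - 1) * (c * s) = 3 * c"
    using LL[of 2 "-1"] unfolding s_def t_def by simp
  then have "c * ((2 - \<alpha>) * t - (\<alpha> * 2 - 1) * s - 3) = 0" by algebra
  then have t: "(2 - \<alpha>) * t - (\<alpha> * 2 - 1) * s = 3" using \<open>c \<noteq> 0\<close> by simp
  show ?thesis
  proof (cases "even n")
    case True
    then have "\<alpha> = 1" using s unfolding s_def by simp
    then have "(of_nat n :: complex) = of_nat 2" unfolding \<alpha>_def by simp
    then show ?thesis by (simp only: of_nat_eq_iff) simp
  next
    case False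
    then have "s = -1" unfolding s_def by simp
    then have "(2 - \<alpha>) * (t - 2) = 0" using t by algebra
    moreover have "t \<noteq> 2"
    proof
      assume "t = 2"
      then have "of_nat (2 ^ n) = (of_nat 2 :: complex)" unfolding t_def by simp
      then have "(2 :: nat) ^ n = 2" by (simp only: of_nat_eq_iff)
      moreover have "(2 :: nat) ^ 2 \<le> 2 ^ n" using \<open>n \<ge> 2\<close> by (rule power_increasing) simp
      ultimately show False by simp
    qed
    ultimately have "\<alpha> = 2" by simp
    then have "(of_nat n :: complex) = of_nat 3" unfolding \<alpha>_def by simp
    then show ?thesis by (simp only: of_nat_eq_iff) simp
  qed
qed

lemma L_cocycle_0_normal_form:
  assumes cocycle: "L_cocycle 0 \<alpha> f" and "\<alpha> \<noteq> 0"
  shows "L_reduced 0 \<alpha> (f - smult (coeff f 1 / \<alpha>) [:0, \<alpha>:])"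
proof -
  define g where "g = f - smult (coeff f 1 / \<alpha>) [:0, \<alpha>:]"
  have g_cocycle: "L_cocycle 0 \<alpha> g"
    unfolding g_def by (rule L_cocycle_diff[OF cocycle L_cocycle_coboundary])
  have low: "coeff g 0 = 0" "coeff g 1 = 0"
    using L_cocycle_0_coeffs(1)[OF cocycle \<open>\<alpha> \<noteq> 0\<close>] \<open>\<alpha> \<noteq> 0\<close> unfolding g_def by simp_all
  have high: "m \<ge> 2 \<Longrightarrow> (of_nat m - \<alpha> - 1) * coeff g m = 0" for m
    using L_cocycle_0_coeffs(2)[OF g_cocycle \<open>\<alpha> \<noteq> 0\<close>] .
  show ?thesis
  proof (cases "g = 0")
    case False
    define n where "n = degree g"
    have lead: "coeff g n \<noteq> 0" using False unfolding n_def by simp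
    then have "n \<noteq> 0" "n \<noteq> 1" using low by (metis One_nat_def)+
    then have "n \<ge> 2" by arith
    then have "of_nat n - \<alpha> - 1 = 0" using high[of n] lead by simp
    then have \<alpha>: "\<alpha> = of_nat n - 1" by algebra
    have "g = monom (coeff g n) n"
    proof (rule poly_eqI)
      fix m
      have "coeff g m = 0" if "m \<noteq> n"
      proof (cases "m \<ge> 2")
        case True
        have "(of_nat m :: complex) \<noteq> of_nat n" using that by (simp only: of_nat_eq_iff) simp
        then show ?thesis using high[OF True] \<alpha> by simp
      next
        case False
        then have "m = 0 \<or> m = 1" by arith
        then show ?thesis using low by auto
      qed
      then show "coeff g m = coeff (monom (coeff g n) n) m" by (auto simp: coeff_monom)
    qed
    moreover have "n = 2 \<or> n = 3"
      using L_cocycle_0_monom[of n "coeff g n"] g_cocycle calculation \<alpha> lead \<open>n \<ge> 2\<close> by simp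
    ultimately show ?thesis
      unfolding g_def[symmetric] L_reduced_def using \<alpha> by auto
  qed (simp add: g_def L_reduced_0)
qed

lemma L_cocycle_normal_form:
  assumes "L_cocycle e \<alpha> f" "\<alpha> \<noteq> 0"
  shows "\<exists>t. L_reduced e \<alpha> (f - smult t [:e, \<alpha>:])"
proof (cases "e = 0")
  case True
  then show ?thesis using L_cocycle_0_normal_form assms by blast
next
  case False
  then have "f - smult (poly f 0 / e) [:e, \<alpha>:] = 0"
    using L_cocycle_nonzero_e[OF assms(1)] by simp
  then show ?thesis using L_reduced_0 by metis
qed

lemma classification_gamma_0:
  assumes bLL: "\<And>d l. bLL R d l = d + 2 * l"
    and h_vanishes: "\<And>f g h. is_cmod R (NF \<alpha> \<beta> 0 \<eta> f g h) \<Longrightarrow> h = 0"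
    and "\<alpha> \<noteq> 0"
    and lst: "\<And>f g. lst f g \<longleftrightarrow> L_reduced (\<eta> + \<beta>) \<alpha> f \<and> Y_cocycle R (\<eta> + \<beta>) \<alpha> g \<and> (f \<noteq> 0 \<or> g \<noteq> 0)"
  shows "classification TYPE('v::ab_group_add) R \<alpha> \<beta> 0 \<eta> lst"
proof (rule classification_intro)
  show "h = 0" if "is_ext R \<eta> (Mabg \<alpha> \<beta> 0) (NF_ext \<alpha> \<beta> 0 \<eta> f g h)" for f g h
    using that h_vanishes is_ext_NF_ext_iff by blast
next
  fix f g
  assume ext: "is_ext R \<eta> (Mabg \<alpha> \<beta> 0) (NF_ext \<alpha> \<beta> 0 \<eta> f g 0)"
    and nontrivial: "\<not> trivial_ext R \<eta> (Mabg \<alpha> \<beta> 0) (NF_ext \<alpha> \<beta> 0 \<eta> f g 0)"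
  have cocycles: "L_cocycle (\<eta> + \<beta>) \<alpha> f" "Y_cocycle R (\<eta> + \<beta>) \<alpha> g"
    using ext is_ext_NF_ext_iff is_cmod_NF_iff_cocycles[OF bLL] by blast+
  then obtain t where reduced: "L_reduced (\<eta> + \<beta>) \<alpha> (f - smult t [:\<eta> + \<beta>, \<alpha>:])"
    using L_cocycle_normal_form \<open>\<alpha> \<noteq> 0\<close> by blast
  have "f + smult (-t) [:\<eta> + \<beta>, \<alpha>:] = f - smult t [:\<eta> + \<beta>, \<alpha>:]" "g + [:-t * 0:] = g"
    by simp_all
  then have "ext_equiv R \<eta> (Mabg \<alpha> \<beta> 0) (NF_ext \<alpha> \<beta> 0 \<eta> f g 0)
      (NF_ext \<alpha> \<beta> 0 \<eta> (f - smult t [:\<eta> + \<beta>, \<alpha>:]) g 0)"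
    using NF_ext_equiv_shift[OF ext, of "-t"] by metis
  moreover have "f - smult t [:\<eta> + \<beta>, \<alpha>:] \<noteq> 0 \<or> g \<noteq> 0"
    using nontrivial trivial_NF_ext_iff[OF ext] by auto
  ultimately show "\<exists>f' g'. lst f' g' \<and> ext_equiv R \<eta> (Mabg \<alpha> \<beta> 0) (NF_ext \<alpha> \<beta> 0 \<eta> f g 0) (NF_ext \<alpha> \<beta> 0 \<eta> f' g' 0)"
    using lst reduced cocycles(2) by blast
next
  fix f g
  assume "lst f g"
  then have reduced: "L_reduced (\<eta> + \<beta>) \<alpha> f" and "Y_cocycle R (\<eta> + \<beta>) \<alpha> g" and "f \<noteq> 0 \<or> g \<noteq> 0"
    using lst by blast+
  then have ext: "is_ext R \<eta> (Mabg \<alpha> \<beta> 0) (NF_ext \<alpha> \<beta> 0 \<eta> f g 0)"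
    using is_ext_NF_ext_iff is_cmod_NF_iff_cocycles[OF bLL] L_cocycle_if_L_reduced by blast
  moreover have "\<not> trivial_ext R \<eta> (Mabg \<alpha> \<beta> 0) (NF_ext \<alpha> \<beta> 0 \<eta> f g 0)"
    using trivial_NF_ext_iff[OF ext] L_reduced_coboundary_eq_0[OF reduced] \<open>f \<noteq> 0 \<or> g \<noteq> 0\<close> by auto
  ultimately show "is_ext R \<eta> (Mabg \<alpha> \<beta> 0) (NF_ext \<alpha> \<beta> 0 \<eta> f g 0) \<and>
      \<not> trivial_ext R \<eta> (Mabg \<alpha> \<beta> 0) (NF_ext \<alpha> \<beta> 0 \<eta> f g 0)" ..
qed

lemma TSV_ab_simps:
  "bLL (TSV_ab a b) d l = d + 2 * l" "bLY (TSV_ab a b) d l = d + a * l + b" "bYY (TSV_ab a b) d l = d + 2 * l"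
  by (simp_all add: TSV_ab_def)

lemma TSV_c_simps:
  "bLL (TSV_c c) d l = d + 2 * l" "bLY (TSV_c c) d l = d + 3 / 2 * l + c"
  "bYY (TSV_c c) d l = (d + 2 * l) * (- d - 2 * c)"
  by (simp_all add: TSV_c_def)

lemma poly_eq_0_if_vanishes_on_sums:
  fixes q h :: "complex poly"
  assumes "\<And>l m. (l - m) * poly q (l + m) * poly h (l + m) = 0" and "q \<noteq> 0"
  shows "h = 0"
proof -
  have "poly (q * h) x = 0" for x
    using assms(1)[of "(x + 1) / 2" "(x - 1) / 2"] by (simp add: field_simps)
  then have "q * h = 0" using poly_all_0_iff_0 by blast
  then show ?thesis using \<open>q \<noteq> 0\<close> by simp
qed

lemma TSV_ab_h_vanishes: "is_cmod (TSV_ab a b) (NF \<alpha> \<beta> 0 \<eta> f g h) \<Longrightarrow> h = 0"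
proof (rule poly_eq_0_if_vanishes_on_sums[where q = 1])
  fix l m
  assume "is_cmod (TSV_ab a b) (NF \<alpha> \<beta> 0 \<eta> f g h)"
  from is_cmod_NF_identities(3)[OF this, of l m]
  show "(l - m) * poly 1 (l + m) * poly h (l + m) = 0"
    by (simp add: TSV_ab_simps)
qed simp

lemma TSV_c_h_vanishes: "is_cmod (TSV_c c) (NF \<alpha> \<beta> 0 \<eta> f g h) \<Longrightarrow> h = 0"
proof (rule poly_eq_0_if_vanishes_on_sums[where q = "[:-2 * c, 1:]"])
  fix l m
  assume "is_cmod (TSV_c c) (NF \<alpha> \<beta> 0 \<eta> f g h)"
  from is_cmod_NF_identities(3)[OF this, of l m]
  show "(l - m) * poly [:-2 * c, 1:] (l + m) * poly h (l + m) = 0"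
    by (simp add: TSV_c_simps algebra_simps)
qed simp

lemma Y_cocycle_affine_linear:
  assumes bLY: "\<And>d l. bLY R d l = d + a * l + b" and "(a, b) \<noteq> (1, 0)"
    and "Y_cocycle R e \<alpha> g"
  shows "g = [:coeff g 0, coeff g 1:]"
proof -
  have "g * [:b, a - 1:] = smult (- poly g 0) [:e, \<alpha>:]"
  proof (rule poly_ext)
    fix x
    have "(e + 0 + \<alpha> * x) * poly g 0 + bLY R (-(x + 0)) x * poly g (x + 0) = 0"
      using \<open>Y_cocycle R e \<alpha> g\<close> unfolding Y_cocycle_def by (rule spec2)
    then show "poly (g * [:b, a - 1:]) x = poly (smult (- poly g 0) [:e, \<alpha>:]) x"
      by (simp add: bLY algebra_simps add_eq_0_iff2)
  qed
  moreover have "[:b, a - 1:] \<noteq> 0" using \<open>(a, b) \<noteq> (1, 0)\<close> by auto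
  ultimately have "degree g \<le> degree (smult (- poly g 0) [:e, \<alpha>:])"
    using degree_mult_right_le by metis
  also have "\<dots> \<le> 1"
    using degree_smult_le[of _ "[:e, \<alpha>:]"] by (simp add: degree_pCons_eq_if split: if_splits)
  finally have deg: "degree g \<le> 1" .
  show ?thesis
  proof (rule poly_eqI)
    fix n
    show "coeff g n = coeff [:coeff g 0, coeff g 1:] n"
    proof (cases n)
      case (Suc k)
      then show ?thesis using deg by (cases k) (simp_all add: coeff_eq_0)
    qed simp
  qed
qed

lemma Y_cocycle_affine_iff:
  assumes bLY: "\<And>d l. bLY R d l = d + a * l + b" and "(a, b) \<noteq> (1, 0)"
  shows "Y_cocycle R e \<alpha> g \<longleftrightarrow> g = 0 \<or> (\<exists>k. g = [:k:] \<and> \<alpha> = 1 - a \<and> b + e = 0)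
           \<or> (\<exists>k. g = smult k [:1, - 1 / b:] \<and> a = 1 \<and> b \<noteq> 0 \<and> b + e = 0 \<and> \<alpha> = 1)"
proof
  assume Y: "Y_cocycle R e \<alpha> g"
  define G H where "G = coeff g 0" and "H = coeff g 1"
  have g: "g = [:G, H:]"
    unfolding G_def H_def by (rule Y_cocycle_affine_linear[OF assms Y])
  have "poly g x = G + H * x" for x
    by (subst g) simp
  then have i: "(e + m + \<alpha> * l) * (G + H * m) + (-(l + m) + a * l + b) * (G + H * (l + m)) = 0" for l m
    using Y[unfolded Y_cocycle_def bLY, rule_format, where l = l and m = m] by simp
  text \<open>\<open>i\<close> is a polynomial identity in \<open>l, m\<close> without \<open>m\<^sup>2\<close>-term; five values determine its coefficients.\<close>
  note i00 = i[where l = 0 and m = 0] and i10 = i[where l = 1 and m = 0] and i01 = i[where l = 0 and m = 1]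
    and i_10 = i[where l = "-1" and m = 0] and i11 = i[where l = 1 and m = 1]
  have eqs: "(b + e) * G = 0" "(b + e) * H = 0" "(a - 1) * H = 0" "(\<alpha> + a - 2) * H = 0"
    "(\<alpha> + a - 1) * G + b * H = 0"
    using i00 apply algebra
    using i00 i01 apply algebra
    using i00 i10 i_10 apply algebra
    using i00 i10 i01 i11 apply algebra
    using i10 i_10 by algebra
  consider "G = 0" "H = 0" | "G \<noteq> 0" "H = 0" | "H \<noteq> 0" by blast
  then show "g = 0 \<or> (\<exists>k. g = [:k:] \<and> \<alpha> = 1 - a \<and> b + e = 0)
      \<or> (\<exists>k. g = smult k [:1, - 1 / b:] \<and> a = 1 \<and> b \<noteq> 0 \<and> b + e = 0 \<and> \<alpha> = 1)"
  proof cases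
    case 1
    then show ?thesis using g by simp
  next
    case 2
    then have "b + e = 0" "\<alpha> + a - 1 = 0" using eqs(1,5) by simp_all
    moreover from this have "\<alpha> = 1 - a" by algebra
    ultimately show ?thesis using g 2 by auto
  next
    case 3
    then have "b + e = 0" and "a = 1" and "\<alpha> + a - 2 = 0" using eqs(2-4) by simp_all
    then have "\<alpha> = 1" by algebra
    have "b \<noteq> 0" using \<open>a = 1\<close> \<open>(a, b) \<noteq> (1, 0)\<close> by auto
    moreover have "G = - b * H" using eqs(5) \<open>\<alpha> = 1\<close> \<open>a = 1\<close> by (simp add: algebra_simps add_eq_0_iff2)
    ultimately have "g = smult (- b * H) [:1, - 1 / b:]" using g by simp
    then show ?thesis using \<open>a = 1\<close> \<open>\<alpha> = 1\<close> \<open>b + e = 0\<close> \<open>b \<noteq> 0\<close> by blast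
  qed
next
  assume "g = 0 \<or> (\<exists>k. g = [:k:] \<and> \<alpha> = 1 - a \<and> b + e = 0)
      \<or> (\<exists>k. g = smult k [:1, - 1 / b:] \<and> a = 1 \<and> b \<noteq> 0 \<and> b + e = 0 \<and> \<alpha> = 1)"
  then consider "g = 0" | k where "g = [:k:]" "\<alpha> = 1 - a" "e = - b"
    | k where "g = smult k [:1, - 1 / b:]" "a = 1" "b \<noteq> 0" "e = - b" "\<alpha> = 1"
    by (auto simp: eq_neg_iff_add_eq_0 add.commute)
  then show "Y_cocycle R e \<alpha> g"
  proof cases
    case 1
    then show ?thesis unfolding Y_cocycle_def by simp
  next
    case 2
    show ?thesis unfolding Y_cocycle_def bLY 2 by (simp add: algebra_simps)
  next
    case 3
    then show ?thesis unfolding Y_cocycle_def bLY by (simp add: field_simps)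
  qed
qed

lemma Y_cocycle_TSV_10_iff:
  assumes "\<alpha> \<noteq> 0"
  shows "Y_cocycle (TSV_ab 1 0) e \<alpha> g \<longleftrightarrow> g = 0 \<or> (\<exists>k. g = monom k 1 \<and> e = 0 \<and> \<alpha> = 1)"
proof
  assume Y0: "Y_cocycle (TSV_ab 1 0) e \<alpha> g"
  have Y: "(e + m + \<alpha> * l) * poly g m = m * poly g (l + m)" for l m
    using Y0[unfolded Y_cocycle_def TSV_ab_simps, rule_format, where l = l and m = m]
    by (simp add: algebra_simps add_eq_0_iff2)
  have "poly g 0 = 0"
    using Y[where l = "(1 - e) / \<alpha>" and m = 0] \<open>\<alpha> \<noteq> 0\<close> by simp
  then have "[:e, 1 - \<alpha>:] * g = 0"
    using Y[where l = "- x" and m = x for x] by (intro poly_ext) (simp add: algebra_simps)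
  moreover have "g = monom (poly g 1) 1" if "e = 0" "\<alpha> = 1"
    using Y[where l = "x - 1" and m = 1 for x] that by (intro poly_ext) (simp add: poly_monom mult.commute)
  ultimately show "g = 0 \<or> (\<exists>k. g = monom k 1 \<and> e = 0 \<and> \<alpha> = 1)"
  proof (cases "e = 0 \<and> \<alpha> = 1")
    case False
    then have "[:e, 1 - \<alpha>:] \<noteq> 0" by auto
    then have "g = 0" using \<open>[:e, 1 - \<alpha>:] * g = 0\<close> by (metis mult_eq_0_iff)
    then show ?thesis by simp
  qed blast
next
  assume "g = 0 \<or> (\<exists>k. g = monom k 1 \<and> e = 0 \<and> \<alpha> = 1)"
  then show "Y_cocycle (TSV_ab 1 0) e \<alpha> g"
    unfolding Y_cocycle_def TSV_ab_simps by (auto simp: poly_monom algebra_simps)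
qed

lemma Y_cocycle_TSV_c_iff:
  "Y_cocycle (TSV_c c) e \<alpha> g \<longleftrightarrow> g = 0 \<or> (\<exists>k. g = [:k:] \<and> \<alpha> = - 1 / 2 \<and> c + e = 0)"
proof -
  have "(3 / 2, c) \<noteq> (1 :: complex, 0 :: complex)" "(3 / 2 :: complex) \<noteq> 1" "(1 - 3 / 2 :: complex) = - 1 / 2"
    by (simp_all add: complex_eq_iff)
  then show ?thesis using Y_cocycle_affine_iff[OF TSV_c_simps(2)] by presburger
qed

lemma list_ab_iff:
  assumes "(a, b) \<noteq> (1, 0)" "\<alpha> \<noteq> 0"
  shows "list_ab a b \<alpha> \<beta> \<eta> f g \<longleftrightarrow>
    L_reduced (\<eta> + \<beta>) \<alpha> f \<and> Y_cocycle (TSV_ab a b) (\<eta> + \<beta>) \<alpha> g \<and> (f \<noteq> 0 \<or> g \<noteq> 0)"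
  unfolding Y_cocycle_affine_iff[OF TSV_ab_simps(2) assms(1)]
proof
  have e: "\<beta> + \<eta> = \<eta> + \<beta>" "b + \<beta> + \<eta> = b + (\<eta> + \<beta>)" by (simp_all add: algebra_simps)
  show "list_ab a b \<alpha> \<beta> \<eta> f g \<Longrightarrow> L_reduced (\<eta> + \<beta>) \<alpha> f \<and> (g = 0 \<or> (\<exists>k. g = [:k:] \<and> \<alpha> = 1 - a \<and> b + (\<eta> + \<beta>) = 0)
      \<or> (\<exists>k. g = smult k [:1, - 1 / b:] \<and> a = 1 \<and> b \<noteq> 0 \<and> b + (\<eta> + \<beta>) = 0 \<and> \<alpha> = 1)) \<and> (f \<noteq> 0 \<or> g \<noteq> 0)"
    unfolding list_ab_def L_reduced_0_iff[symmetric] L_reduced_0_nonzero_iff[symmetric] e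
    by (elim disjE conjE exE) (simp_all add: L_reduced_0)
  assume "L_reduced (\<eta> + \<beta>) \<alpha> f \<and> (g = 0 \<or> (\<exists>k. g = [:k:] \<and> \<alpha> = 1 - a \<and> b + (\<eta> + \<beta>) = 0)
      \<or> (\<exists>k. g = smult k [:1, - 1 / b:] \<and> a = 1 \<and> b \<noteq> 0 \<and> b + (\<eta> + \<beta>) = 0 \<and> \<alpha> = 1)) \<and> (f \<noteq> 0 \<or> g \<noteq> 0)"
  then have L: "L_reduced (\<eta> + \<beta>) \<alpha> f" and Y: "g = 0 \<or> (\<exists>k. g = [:k:] \<and> \<alpha> = 1 - a \<and> b + (\<eta> + \<beta>) = 0)
      \<or> (\<exists>k. g = smult k [:1, - 1 / b:] \<and> a = 1 \<and> b \<noteq> 0 \<and> b + (\<eta> + \<beta>) = 0 \<and> \<alpha> = 1)" and "f \<noteq> 0 \<or> g \<noteq> 0"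
    by blast+
  show "list_ab a b \<alpha> \<beta> \<eta> f g"
  proof (cases "g = 0")
    case True
    then show ?thesis using L \<open>f \<noteq> 0 \<or> g \<noteq> 0\<close> L_reduced_nonzero_e
      unfolding list_ab_def L_reduced_0_nonzero_iff[symmetric] e by (cases "\<eta> + \<beta> = 0") auto
  next
    case False
    with Y consider k where "k \<noteq> 0" "g = [:k:]" "\<alpha> = 1 - a" "b + (\<eta> + \<beta>) = 0"
      | k where "k \<noteq> 0" "g = smult k [:1, - 1 / b:]" "a = 1" "b \<noteq> 0" "b + (\<eta> + \<beta>) = 0" "\<alpha> = 1"
      by (metis pCons_0_0 smult_0_left)
    then show ?thesis
    proof cases
      case 1
      then show ?thesis using L L_reduced_nonzero_e \<open>\<alpha> \<noteq> 0\<close>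
        unfolding list_ab_def L_reduced_0_iff[symmetric] e by (cases "\<eta> + \<beta> = 0") auto
    next
      case 2
      then have "\<eta> + \<beta> \<noteq> 0" by auto
      then show ?thesis using 2 L L_reduced_nonzero_e unfolding list_ab_def e by auto
    qed
  qed
qed

lemma list_c_iff:
  "list_c c \<alpha> \<beta> \<eta> f g \<longleftrightarrow>
    L_reduced (\<eta> + \<beta>) \<alpha> f \<and> Y_cocycle (TSV_c c) (\<eta> + \<beta>) \<alpha> g \<and> (f \<noteq> 0 \<or> g \<noteq> 0)"
  unfolding Y_cocycle_TSV_c_iff
proof
  have e: "\<beta> + \<eta> = \<eta> + \<beta>" "c + \<beta> + \<eta> = c + (\<eta> + \<beta>)" by (simp_all add: algebra_simps)
  have "(- 1 / 2 :: complex) \<noteq> 1" "(- 1 / 2 :: complex) \<noteq> 2" by (simp_all add: complex_eq_iff)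
  then have L_half: "L_reduced e (- 1 / 2) f \<longleftrightarrow> f = 0" for e f
    unfolding L_reduced_def by simp
  show "list_c c \<alpha> \<beta> \<eta> f g \<Longrightarrow> L_reduced (\<eta> + \<beta>) \<alpha> f \<and> (g = 0 \<or> (\<exists>k. g = [:k:] \<and> \<alpha> = - 1 / 2 \<and> c + (\<eta> + \<beta>) = 0))
      \<and> (f \<noteq> 0 \<or> g \<noteq> 0)"
    unfolding list_c_def L_reduced_0_nonzero_iff[symmetric] e
    by (elim disjE conjE exE) (simp_all add: L_reduced_0)
  assume "L_reduced (\<eta> + \<beta>) \<alpha> f \<and> (g = 0 \<or> (\<exists>k. g = [:k:] \<and> \<alpha> = - 1 / 2 \<and> c + (\<eta> + \<beta>) = 0)) \<and> (f \<noteq> 0 \<or> g \<noteq> 0)"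
  then have L: "L_reduced (\<eta> + \<beta>) \<alpha> f" and Y: "g = 0 \<or> (\<exists>k. g = [:k:] \<and> \<alpha> = - 1 / 2 \<and> c + (\<eta> + \<beta>) = 0)" and "f \<noteq> 0 \<or> g \<noteq> 0"
    by blast+
  show "list_c c \<alpha> \<beta> \<eta> f g"
  proof (cases "g = 0")
    case True
    then show ?thesis using L \<open>f \<noteq> 0 \<or> g \<noteq> 0\<close> L_reduced_nonzero_e
      unfolding list_c_def L_reduced_0_nonzero_iff[symmetric] e by (cases "\<eta> + \<beta> = 0") auto
  next
    case False
    then show ?thesis using Y L L_half unfolding list_c_def e by auto
  qed
qed

lemma list_10_iff:
  assumes "\<alpha> \<noteq> 0"
  shows "list_10 \<alpha> \<beta> 0 \<eta> f g \<longleftrightarrow>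
    L_reduced (\<eta> + \<beta>) \<alpha> f \<and> Y_cocycle (TSV_ab 1 0) (\<eta> + \<beta>) \<alpha> g \<and> (f \<noteq> 0 \<or> g \<noteq> 0)"
  unfolding Y_cocycle_TSV_10_iff[OF assms]
proof
  have e: "\<beta> + \<eta> = \<eta> + \<beta>" by simp
  show "list_10 \<alpha> \<beta> 0 \<eta> f g \<Longrightarrow> L_reduced (\<eta> + \<beta>) \<alpha> f \<and> (g = 0 \<or> (\<exists>k. g = monom k 1 \<and> \<eta> + \<beta> = 0 \<and> \<alpha> = 1))
      \<and> (f \<noteq> 0 \<or> g \<noteq> 0)"
    unfolding list_10_def L_reduced_0_nonzero_iff[symmetric] e
    by (elim disjE conjE exE) (simp_all add: L_reduced_0_iff)
  assume "L_reduced (\<eta> + \<beta>) \<alpha> f \<and> (g = 0 \<or> (\<exists>k. g = monom k 1 \<and> \<eta> + \<beta> = 0 \<and> \<alpha> = 1)) \<and> (f \<noteq> 0 \<or> g \<noteq> 0)"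
  then have L: "L_reduced (\<eta> + \<beta>) \<alpha> f" and Y: "g = 0 \<or> (\<exists>k. g = monom k 1 \<and> \<eta> + \<beta> = 0 \<and> \<alpha> = 1)" and "f \<noteq> 0 \<or> g \<noteq> 0"
    by blast+
  show "list_10 \<alpha> \<beta> 0 \<eta> f g"
  proof (cases "g = 0")
    case True
    then show ?thesis using L \<open>f \<noteq> 0 \<or> g \<noteq> 0\<close> L_reduced_nonzero_e
      unfolding list_10_def L_reduced_0_nonzero_iff[symmetric] e by (cases "\<eta> + \<beta> = 0") auto
  next
    case False
    then show ?thesis using Y L unfolding list_10_def e by (auto simp: L_reduced_0_iff)
  qed
qed

lemma classification_TSV_10_gamma_nonzero:
  assumes "\<gamma> \<noteq> 0"
  shows "classification TYPE('v::ab_group_add) (TSV_ab 1 0) \<alpha> \<beta> \<gamma> \<eta> (list_10 \<alpha> \<beta> \<gamma> \<eta>)"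
proof (rule classification_intro)
  fix f g h
  assume "is_ext (TSV_ab 1 0) \<eta> (Mabg \<alpha> \<beta> \<gamma>) (NF_ext \<alpha> \<beta> \<gamma> \<eta> f g h)"
  then have "\<gamma> * poly h x = 0" for x
    using is_cmod_NF_identities(4) is_ext_NF_ext_iff by blast
  then show "h = 0" using \<open>\<gamma> \<noteq> 0\<close> by (intro poly_ext) simp
next
  fix f g
  assume ext: "is_ext (TSV_ab 1 0) \<eta> (Mabg \<alpha> \<beta> \<gamma>) (NF_ext \<alpha> \<beta> \<gamma> \<eta> f g 0)"
    and nontrivial: "\<not> trivial_ext (TSV_ab 1 0) \<eta> (Mabg \<alpha> \<beta> \<gamma>) (NF_ext \<alpha> \<beta> \<gamma> \<eta> f g 0)"
  have cmod: "is_cmod (TSV_ab 1 0) (NF \<alpha> \<beta> \<gamma> \<eta> f g 0)"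
    using ext is_ext_NF_ext_iff by blast
  define t where "t = poly g 0 / \<gamma>"
  have "g = [:t * \<gamma>:]"
    using is_cmod_NF_identities(3)[OF cmod, where l = x and m = 0 for x] \<open>\<gamma> \<noteq> 0\<close>
    unfolding t_def by (intro poly_ext) simp
  moreover have "f = smult t [:\<eta> + \<beta>, \<alpha>:]"
    using is_cmod_NF_identities(2)[OF cmod, where l = x and m = 0 for x] \<open>\<gamma> \<noteq> 0\<close> \<open>g = [:t * \<gamma>:]\<close>
    unfolding t_def by (intro poly_ext) (simp add: TSV_ab_simps field_simps)
  ultimately show "\<exists>f' g'. list_10 \<alpha> \<beta> \<gamma> \<eta> f' g' \<and>
      ext_equiv (TSV_ab 1 0) \<eta> (Mabg \<alpha> \<beta> \<gamma>) (NF_ext \<alpha> \<beta> \<gamma> \<eta> f g 0) (NF_ext \<alpha> \<beta> \<gamma> \<eta> f' g' 0)"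
    using nontrivial trivial_NF_ext_iff[OF ext] by blast
qed (use \<open>\<gamma> \<noteq> 0\<close> in \<open>simp add: list_10_def\<close>)

lemma classification_TSV_10:
  assumes "(\<alpha>, \<gamma>) \<noteq> (0, 0)"
  shows "classification TYPE('v::ab_group_add) (TSV_ab 1 0) \<alpha> \<beta> \<gamma> \<eta> (list_10 \<alpha> \<beta> \<gamma> \<eta>)"
proof (cases "\<gamma> = 0")
  case True
  then have "\<alpha> \<noteq> 0" using assms by simp
  then show ?thesis
    unfolding \<open>\<gamma> = 0\<close> by (intro classification_gamma_0 TSV_ab_simps(1) TSV_ab_h_vanishes list_10_iff)
qed (rule classification_TSV_10_gamma_nonzero)

theorem theorem4p4:
  shows "(\<forall>a b \<alpha> \<beta> \<eta>. (a, b) \<noteq> (1, 0) \<and> \<alpha> \<noteq> 0 \<longrightarrow>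
            classification TYPE('v::ab_group_add) (TSV_ab a b) \<alpha> \<beta> 0 \<eta> (list_ab a b \<alpha> \<beta> \<eta>))
       \<and> (\<forall>\<alpha> \<beta> \<gamma> \<eta>. (\<alpha>, \<gamma>) \<noteq> (0, 0) \<longrightarrow>
            classification TYPE('v) (TSV_ab 1 0) \<alpha> \<beta> \<gamma> \<eta> (list_10 \<alpha> \<beta> \<gamma> \<eta>))
       \<and> (\<forall>c \<alpha> \<beta> \<eta>. \<alpha> \<noteq> 0 \<longrightarrow>
            classification TYPE('v) (TSV_c c) \<alpha> \<beta> 0 \<eta> (list_c c \<alpha> \<beta> \<eta>))"
proof (intro conjI allI impI)
  fix a b \<alpha> \<beta> \<eta> :: complex
  assume "(a, b) \<noteq> (1, 0) \<and> \<alpha> \<noteq> 0"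
  then show "classification TYPE('v) (TSV_ab a b) \<alpha> \<beta> 0 \<eta> (list_ab a b \<alpha> \<beta> \<eta>)"
    by (intro classification_gamma_0 TSV_ab_simps(1) TSV_ab_h_vanishes list_ab_iff) simp_all
next
  fix \<alpha> \<beta> \<gamma> \<eta> :: complex
  assume "(\<alpha>, \<gamma>) \<noteq> (0, 0)"
  then show "classification TYPE('v) (TSV_ab 1 0) \<alpha> \<beta> \<gamma> \<eta> (list_10 \<alpha> \<beta> \<gamma> \<eta>)"
    by (rule classification_TSV_10)
next
  fix c \<alpha> \<beta> \<eta> :: complex
  assume "\<alpha> \<noteq> 0"
  then show "classification TYPE('v) (TSV_c c) \<alpha> \<beta> 0 \<eta> (list_c c \<alpha> \<beta> \<eta>)"
    by (intro classification_gamma_0 TSV_c_simps(1) TSV_c_h_vanishes list_c_iff)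
qed

end
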